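(* Let $(M^n,g)$ be a Riemannian manifold with Levi-Civita connection $\nabla$, and let $K_{bcd}{}^e$ be a $(1,3)$-tensor field satisfying $$\nabla_m K_{bce}{}^m = A\, \nabla_m R_{bce}{}^m + B\,(a_{be}\nabla_c \varphi- a_{ce}\nabla_b\varphi)$$ with nonzero constants $A,B$, a smooth function $\varphi$ and a symmetric Codazzi tensor $a_{bc}$. Suppose $M$ is $K$-recurrent: $\nabla_a K_{bcd}{}^e =\lambda_a K_{bcd}{}^e$ for a nonzero covector field $\lambda$, and suppose $\lambda$ is closed ($\nabla_a\lambda_b=\nabla_b\lambda_a$). Define $B_{abcd}{}^e = \nabla_a K_{bcd}{}^e +\nabla_b K_{cad}{}^e +\nabla_c K_{abd}{}^e$. Then $$R_{am}R_{bce}{}^m + R_{bm}R_{cae}{}^m + R_{cm}R_{abe}{}^m =\frac{1}{A}\nabla_m B_{abce}{}^m .$$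
   Context: Abstract index notation with Einstein summation. $R_{abc}{}^d = \partial_a \Gamma_{bc}^d - \partial_b\Gamma_{ac}^d - \Gamma_{ac}^k\Gamma_{bk}^d + \Gamma_{ak}^d \Gamma_{bc}^k$, $R_{ac}=R_{abc}{}^b$. A Codazzi tensor is a symmetric $(0,2)$ tensor with $\nabla_b a_{cd}=\nabla_c a_{bd}$. *)

theory Defs
  imports "HOL-Analysis.Analysis"
begin

text \<open>Local coordinate calculus on an open chart domain U of R^n (index type 'n).
 Tensor components are real-valued functions of the point; abstract indices become
 coordinate indices of type 'n, Einstein summation becomes explicit sums over UNIV.\<close>

definition pd :: "'n::finite \<Rightarrow> (real^'n \<Rightarrow> real) \<Rightarrow> real^'n \<Rightarrow> real" where
  "pd i f x = frechet_derivative f (at x) (axis i 1)"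

definition smooth_on :: "(real^'n::finite \<Rightarrow> real) \<Rightarrow> (real^'n) set \<Rightarrow> bool" where
  "smooth_on f U \<longleftrightarrow> (\<forall>is::'n list. \<forall>x\<in>U. (foldr pd is f) differentiable (at x))"

definition riemannian_metric :: "(real^'n::finite \<Rightarrow> 'n \<Rightarrow> 'n \<Rightarrow> real) \<Rightarrow> (real^'n) set \<Rightarrow> bool" where
  "riemannian_metric g U \<longleftrightarrow>
     (\<forall>i j. smooth_on (\<lambda>x. g x i j) U) \<and>
     (\<forall>x\<in>U. \<forall>i j. g x i j = g x j i) \<and>
     (\<forall>x\<in>U. \<forall>v::real^'n. v \<noteq> 0 \<longrightarrow> (\<Sum>i\<in>UNIV. \<Sum>j\<in>UNIV. g x i j * v$i * v$j) > 0)"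

definition ginv :: "(real^'n::finite \<Rightarrow> 'n \<Rightarrow> 'n \<Rightarrow> real) \<Rightarrow> real^'n \<Rightarrow> 'n \<Rightarrow> 'n \<Rightarrow> real" where
  "ginv g x i j = matrix_inv (\<chi> k l. g x k l) $ i $ j"

text \<open>Christoffel symbols of the Levi-Civita connection: Christoffel g x b c d = Gamma_{bc}^d.\<close>
definition Christoffel :: "(real^'n::finite \<Rightarrow> 'n \<Rightarrow> 'n \<Rightarrow> real) \<Rightarrow> real^'n \<Rightarrow> 'n \<Rightarrow> 'n \<Rightarrow> 'n \<Rightarrow> real" where
  "Christoffel g x b c d = (1/2) * (\<Sum>e\<in>UNIV. ginv g x d e *
      (pd b (\<lambda>y. g y c e) x + pd c (\<lambda>y. g y b e) x - pd e (\<lambda>y. g y b c) x))"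

text \<open>Riemann tensor R_{abc}^d = Riem g x a b c d, with the convention of the paper.\<close>
definition Riem :: "(real^'n::finite \<Rightarrow> 'n \<Rightarrow> 'n \<Rightarrow> real) \<Rightarrow> real^'n \<Rightarrow> 'n \<Rightarrow> 'n \<Rightarrow> 'n \<Rightarrow> 'n \<Rightarrow> real" where
  "Riem g x a b c d =
     pd a (\<lambda>y. Christoffel g y b c d) x - pd b (\<lambda>y. Christoffel g y a c d) x
     - (\<Sum>k\<in>UNIV. Christoffel g x a c k * Christoffel g x b k d)
     + (\<Sum>k\<in>UNIV. Christoffel g x a k d * Christoffel g x b c k)"

definition Ric :: "(real^'n::finite \<Rightarrow> 'n \<Rightarrow> 'n \<Rightarrow> real) \<Rightarrow> real^'n \<Rightarrow> 'n \<Rightarrow> 'n \<Rightarrow> real" where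
  "Ric g x a c = (\<Sum>b\<in>UNIV. Riem g x a b c b)"

text \<open>General tensor fields: T x ls us is the component with lower indices ls and upper
 indices us. Covariant derivative nabla g T x a ls us = nabla_a T_{ls}^{us}.\<close>
definition nabla :: "(real^'n::finite \<Rightarrow> 'n \<Rightarrow> 'n \<Rightarrow> real) \<Rightarrow> (real^'n \<Rightarrow> 'n list \<Rightarrow> 'n list \<Rightarrow> real)
                      \<Rightarrow> real^'n \<Rightarrow> 'n \<Rightarrow> 'n list \<Rightarrow> 'n list \<Rightarrow> real" where
  "nabla g T x a ls us =
     pd a (\<lambda>y. T y ls us) x
     - (\<Sum>i<length ls. \<Sum>k\<in>UNIV. Christoffel g x a (ls!i) k * T x (ls[i:=k]) us)
     + (\<Sum>j<length us. \<Sum>k\<in>UNIV. Christoffel g x a k (us!j) * T x ls (us[j:=k]))"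

definition T00 :: "(real^'n::finite \<Rightarrow> real) \<Rightarrow> real^'n \<Rightarrow> 'n list \<Rightarrow> 'n list \<Rightarrow> real" where
  "T00 f x ls us = f x"
definition T01 :: "(real^'n::finite \<Rightarrow> 'n \<Rightarrow> real) \<Rightarrow> real^'n \<Rightarrow> 'n list \<Rightarrow> 'n list \<Rightarrow> real" where
  "T01 f x ls us = f x (ls!0)"
definition T02 :: "(real^'n::finite \<Rightarrow> 'n \<Rightarrow> 'n \<Rightarrow> real) \<Rightarrow> real^'n \<Rightarrow> 'n list \<Rightarrow> 'n list \<Rightarrow> real" where
  "T02 f x ls us = f x (ls!0) (ls!1)"
definition T13 :: "(real^'n::finite \<Rightarrow> 'n \<Rightarrow> 'n \<Rightarrow> 'n \<Rightarrow> 'n \<Rightarrow> real) \<Rightarrow> real^'n \<Rightarrow> 'n list \<Rightarrow> 'n list \<Rightarrow> real" where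
  "T13 f x ls us = f x (ls!0) (ls!1) (ls!2) (us!0)"
definition T14 :: "(real^'n::finite \<Rightarrow> 'n \<Rightarrow> 'n \<Rightarrow> 'n \<Rightarrow> 'n \<Rightarrow> 'n \<Rightarrow> real) \<Rightarrow> real^'n \<Rightarrow> 'n list \<Rightarrow> 'n list \<Rightarrow> real" where
  "T14 f x ls us = f x (ls!0) (ls!1) (ls!2) (ls!3) (us!0)"

definition nabla13 :: "(real^'n::finite \<Rightarrow> 'n \<Rightarrow> 'n \<Rightarrow> real) \<Rightarrow> (real^'n \<Rightarrow> 'n \<Rightarrow> 'n \<Rightarrow> 'n \<Rightarrow> 'n \<Rightarrow> real)
     \<Rightarrow> real^'n \<Rightarrow> 'n \<Rightarrow> 'n \<Rightarrow> 'n \<Rightarrow> 'n \<Rightarrow> 'n \<Rightarrow> real" where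
  "nabla13 g K x a b c d e = nabla g (T13 K) x a [b, c, d] [e]"

definition Btens :: "(real^'n::finite \<Rightarrow> 'n \<Rightarrow> 'n \<Rightarrow> real) \<Rightarrow> (real^'n \<Rightarrow> 'n \<Rightarrow> 'n \<Rightarrow> 'n \<Rightarrow> 'n \<Rightarrow> real)
     \<Rightarrow> real^'n \<Rightarrow> 'n \<Rightarrow> 'n \<Rightarrow> 'n \<Rightarrow> 'n \<Rightarrow> 'n \<Rightarrow> real" where
  "Btens g K x a b c d e = nabla13 g K x a b c d e + nabla13 g K x b c a d e + nabla13 g K x c a b d e"

end

theory Submission
  imports Defs
begin

(* Everything is computed in one chart U: tensor fields are component functions and nabla
   is the coordinate covariant derivative of the Levi-Civita connection.  Writing Sum_cyc for
   the cyclic sum over (p, b, c), the theorem is the chain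
     nabla_m B_pbce^m = Sum_cyc nabla_p (div K)_bce          (recurrence, closedness of lam)
                      = A Sum_cyc nabla_p (div R)_bce         (hypothesis on div K; the Codazzi
                                                               term has zero cyclic derivative)
                      = A Sum_cyc Ric_pm R_bce^m              (contracted Bianchi identity and
                                                               Ricci identity for Ric). *)

lemma pd_eqI:
  assumes "(f has_derivative D) (at x)"
  shows "pd i f x = D (axis i 1)"
  using frechet_derivative_at[OF assms] unfolding pd_def by simp

lemma pd_local:
  assumes "open U" "x \<in> U" "\<And>y. y \<in> U \<Longrightarrow> f y = h y"
  shows "pd i f x = pd i h x"
proof -
  have "(f has_derivative D) (at x) \<longleftrightarrow> (h has_derivative D) (at x)" for D
    using has_derivative_transform_within_open[OF _ assms(1,2)] assms(3) by metis
  then show ?thesis unfolding pd_def frechet_derivative_def by simp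
qed

lemma differentiable_local:
  assumes "open U" "x \<in> U" "\<And>y. y \<in> U \<Longrightarrow> f y = h y" "f differentiable (at x)"
  shows "h differentiable (at x)"
  using assms has_derivative_transform_within_open unfolding differentiable_def by metis

lemma pd_const: "pd i (\<lambda>y. c) x = 0"
  unfolding pd_def by simp

lemma pd_add:
  assumes "f differentiable (at x)" "h differentiable (at x)"
  shows "pd i (\<lambda>y. f y + h y) x = pd i f x + pd i h x"
  using pd_eqI[OF has_derivative_add[OF assms[unfolded frechet_derivative_works]]]
  by (simp add: pd_def)

lemma pd_diff:
  assumes "f differentiable (at x)" "h differentiable (at x)"
  shows "pd i (\<lambda>y. f y - h y) x = pd i f x - pd i h x"
  using pd_eqI[OF has_derivative_diff[OF assms[unfolded frechet_derivative_works]]]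
  by (simp add: pd_def)

lemma pd_mult:
  assumes "f differentiable (at x)" "h differentiable (at x)"
  shows "pd i (\<lambda>y. f y * h y) x = pd i f x * h x + f x * pd i h x"
  using pd_eqI[OF has_derivative_mult[OF assms[unfolded frechet_derivative_works]]]
  by (simp add: pd_def)

lemma pd_cmult: "f differentiable (at x) \<Longrightarrow> pd i (\<lambda>y. c * f y) x = c * pd i f x"
  using pd_mult[of "\<lambda>y. c" x f i] by (simp add: pd_const)

lemma pd_inverse:
  fixes f :: "real^'n::finite \<Rightarrow> real"
  assumes "f differentiable (at x)" "f x \<noteq> 0"
  shows "pd i (\<lambda>y. inverse (f y)) x = - (pd i f x * inverse (f x) * inverse (f x))"
  using pd_eqI[OF Deriv.has_derivative_inverse[OF assms(2) assms(1)[unfolded frechet_derivative_works]]]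
  by (simp add: pd_def)

lemma pd_sum:
  assumes "finite S" "\<And>k. k \<in> S \<Longrightarrow> F k differentiable (at x)"
  shows "pd i (\<lambda>y. \<Sum>k\<in>S. F k y) x = (\<Sum>k\<in>S. pd i (F k) x)"
  using assms
proof (induction S rule: finite_induct)
  case (insert k S)
  have "(\<lambda>y. \<Sum>k\<in>S. F k y) differentiable (at x)"
    using insert by (intro differentiable_sum) auto
  then show ?case using insert pd_add[of "F k" x] by simp
qed (simp add: pd_const)

(* Smoothness is this property for every n; the finite orders
   make the closure properties provable by induction. *)
primrec differentiable_upto :: "nat \<Rightarrow> (real^'n::finite) set \<Rightarrow> (real^'n \<Rightarrow> real) \<Rightarrow> bool" where
  "differentiable_upto 0 U f \<longleftrightarrow> (\<forall>x\<in>U. f differentiable (at x))"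
| "differentiable_upto (Suc n) U f \<longleftrightarrow>
     (\<forall>x\<in>U. f differentiable (at x)) \<and> (\<forall>i. differentiable_upto n U (pd i f))"

lemma differentiable_upto_iff:
  "differentiable_upto n U f \<longleftrightarrow>
     (\<forall>is. length is \<le> n \<longrightarrow> (\<forall>x\<in>U. foldr pd is f differentiable (at x)))"
proof (induction n arbitrary: f)
  case 0
  then show ?case by simp
next
  case (Suc n)
  have "(\<forall>is. length is \<le> Suc n \<longrightarrow> (\<forall>x\<in>U. foldr pd is f differentiable (at x))) \<longleftrightarrow>
        (\<forall>x\<in>U. f differentiable (at x)) \<and>
        (\<forall>i is. length is \<le> n \<longrightarrow> (\<forall>x\<in>U. foldr pd is (pd i f) differentiable (at x)))"
    (is "?L \<longleftrightarrow> ?R")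
  proof
    assume L: ?L
    have "\<forall>x\<in>U. foldr pd (is @ [i]) f differentiable (at x)" if "length is \<le> n" for i "is"
      using L[rule_format, of "is @ [i]"] that by simp
    then show ?R
      using L[rule_format, of "[]"] by simp
  next
    assume R: ?R
    show ?L
    proof (intro allI impI)
      fix "is" :: "'a list" assume "length is \<le> Suc n"
      then show "\<forall>x\<in>U. foldr pd is f differentiable (at x)"
        using R by (cases "is" rule: rev_cases) auto
    qed
  qed
  then show ?case using Suc.IH by simp
qed

lemma smooth_on_iff_differentiable_upto:
  "smooth_on f U \<longleftrightarrow> (\<forall>n. differentiable_upto n U f)"
  unfolding smooth_on_def differentiable_upto_iff by (meson order_refl)

lemma differentiable_upto_Suc_imp: "differentiable_upto (Suc n) U f \<Longrightarrow> differentiable_upto n U f"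
  by (induction n arbitrary: f) auto

context
  fixes U :: "(real^'n::finite) set"
  assumes U: "open U"
begin

lemma differentiable_upto_local:
  "differentiable_upto n U f \<Longrightarrow> (\<And>y. y \<in> U \<Longrightarrow> f y = h y) \<Longrightarrow> differentiable_upto n U h"
proof (induction n arbitrary: f h)
  case 0
  then show ?case using differentiable_local[OF U, of _ f h] by simp
next
  case (Suc n)
  have pd_eq: "\<And>y. y \<in> U \<Longrightarrow> pd i f y = pd i h y" for i
    using pd_local[OF U] Suc.prems(2) by blast
  have "differentiable_upto n U (pd i h)" for i
    using Suc.IH[of "pd i f" "pd i h"] Suc.prems(1) pd_eq by simp
  then show ?case
    using Suc.prems differentiable_local[OF U, of _ f h] by simp
qed

lemma differentiable_upto_const: "differentiable_upto n U (\<lambda>y. c)"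
proof (induction n arbitrary: c)
  case (Suc n)
  then show ?case by (simp add: pd_const[abs_def])
qed simp

lemma differentiable_upto_add:
  "differentiable_upto n U f \<Longrightarrow> differentiable_upto n U h \<Longrightarrow> differentiable_upto n U (\<lambda>y. f y + h y)"
proof (induction n arbitrary: f h)
  case (Suc n)
  have "differentiable_upto n U (\<lambda>y. pd i f y + pd i h y)" for i
    using Suc by simp
  then have "differentiable_upto n U (pd i (\<lambda>y. f y + h y))" for i
    by (rule differentiable_upto_local) (use Suc.prems in \<open>simp add: pd_add\<close>)
  with Suc.prems show ?case by simp
qed simp

lemma differentiable_upto_mult:
  "differentiable_upto n U f \<Longrightarrow> differentiable_upto n U h \<Longrightarrow> differentiable_upto n U (\<lambda>y. f y * h y)"
proof (induction n arbitrary: f h)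
  case (Suc n)
  have "differentiable_upto n U f" "differentiable_upto n U h"
    using Suc.prems differentiable_upto_Suc_imp by blast+
  then have "differentiable_upto n U (\<lambda>y. pd i f y * h y + f y * pd i h y)" for i
    using Suc.prems Suc.IH[of "pd i f" h] Suc.IH[of f "pd i h"] by (simp add: differentiable_upto_add)
  then have "differentiable_upto n U (pd i (\<lambda>y. f y * h y))" for i
    by (rule differentiable_upto_local) (use Suc.prems in \<open>simp add: pd_mult\<close>)
  with Suc.prems show ?case by simp
qed simp

lemma differentiable_upto_inverse:
  "differentiable_upto n U f \<Longrightarrow> (\<forall>y\<in>U. f y \<noteq> 0) \<Longrightarrow> differentiable_upto n U (\<lambda>y. inverse (f y))"
proof (induction n arbitrary: f)
  case 0
  then show ?case by (auto intro: differentiable_inverse)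
next
  case (Suc n)
  have IH: "differentiable_upto n U (\<lambda>y. inverse (f y))"
    using Suc differentiable_upto_Suc_imp by blast
  have "differentiable_upto n U (\<lambda>y. (-1) * (pd i f y * inverse (f y) * inverse (f y)))" for i
    using Suc.prems IH by (intro differentiable_upto_mult differentiable_upto_const) auto
  then have "differentiable_upto n U (pd i (\<lambda>y. inverse (f y)))" for i
    by (rule differentiable_upto_local) (use Suc.prems in \<open>simp add: pd_inverse\<close>)
  with Suc.prems show ?case by simp
qed

lemma smooth_const: "smooth_on (\<lambda>y. c) U"
  by (simp add: smooth_on_iff_differentiable_upto differentiable_upto_const)

lemma smooth_add: "smooth_on f U \<Longrightarrow> smooth_on h U \<Longrightarrow> smooth_on (\<lambda>y. f y + h y) U"
  by (simp add: smooth_on_iff_differentiable_upto differentiable_upto_add)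

lemma smooth_mult: "smooth_on f U \<Longrightarrow> smooth_on h U \<Longrightarrow> smooth_on (\<lambda>y. f y * h y) U"
  by (simp add: smooth_on_iff_differentiable_upto differentiable_upto_mult)

lemma smooth_diff: "smooth_on f U \<Longrightarrow> smooth_on h U \<Longrightarrow> smooth_on (\<lambda>y. f y - h y) U"
  using smooth_add[OF _ smooth_mult[OF smooth_const, of h "-1"], of f] by simp

lemma smooth_divide:
  "smooth_on f U \<Longrightarrow> smooth_on h U \<Longrightarrow> (\<forall>y\<in>U. h y \<noteq> 0) \<Longrightarrow> smooth_on (\<lambda>y. f y / h y) U"
  using smooth_mult[of f "\<lambda>y. inverse (h y)"]
  by (simp add: smooth_on_iff_differentiable_upto differentiable_upto_inverse divide_inverse)

lemma smooth_sum:
  "finite S \<Longrightarrow> (\<And>k. k \<in> S \<Longrightarrow> smooth_on (F k) U) \<Longrightarrow> smooth_on (\<lambda>y. \<Sum>k\<in>S. F k y) U"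
  by (induction S rule: finite_induct) (auto intro: smooth_add smooth_const)

lemma smooth_prod:
  "finite S \<Longrightarrow> (\<And>k. k \<in> S \<Longrightarrow> smooth_on (F k) U) \<Longrightarrow> smooth_on (\<lambda>y. \<Prod>k\<in>S. F k y) U"
  by (induction S rule: finite_induct) (auto intro: smooth_mult smooth_const)

lemma smooth_local: "smooth_on f U \<Longrightarrow> (\<And>y. y \<in> U \<Longrightarrow> f y = h y) \<Longrightarrow> smooth_on h U"
  unfolding smooth_on_iff_differentiable_upto using differentiable_upto_local by blast

lemma smooth_det: "(\<And>r s. smooth_on (\<lambda>y. M y r s) U) \<Longrightarrow> smooth_on (\<lambda>y. det (\<chi> r s. M y r s)) U"
  unfolding det_def
  by (auto intro!: smooth_sum smooth_mult smooth_const smooth_prod)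

lemma smooth_if: "smooth_on f U \<Longrightarrow> smooth_on h U \<Longrightarrow> smooth_on (\<lambda>y. if P then f y else h y) U"
  by (cases P) auto

end

lemma smooth_pd: "smooth_on f U \<Longrightarrow> smooth_on (pd i f) U"
  by (simp add: smooth_on_iff_differentiable_upto) (meson differentiable_upto.simps(2))

lemma smooth_differentiable: "smooth_on f U \<Longrightarrow> x \<in> U \<Longrightarrow> f differentiable (at x)"
  by (simp add: smooth_on_iff_differentiable_upto) (meson differentiable_upto.simps(1))

(* The second difference of f over a small square is written, by two
   applications of the mean value theorem, as t^2 times a mixed partial taken at an
   interior point; doing this in both orders and letting t -> 0 gives the symmetry. *)
lemma has_real_derivative_along_line:
  fixes f :: "'a::real_normed_vector \<Rightarrow> real"
  assumes "f differentiable (at (q + s *\<^sub>R w))"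
  shows "((\<lambda>s. f (q + s *\<^sub>R w)) has_real_derivative frechet_derivative f (at (q + s *\<^sub>R w)) w) (at s)"
proof -
  have "((\<lambda>s. q + s *\<^sub>R w) has_derivative (\<lambda>h. h *\<^sub>R w)) (at s)"
    by (auto intro!: derivative_eq_intros)
  then have "((\<lambda>s. f (q + s *\<^sub>R w)) has_derivative (\<lambda>h. frechet_derivative f (at (q + s *\<^sub>R w)) (h *\<^sub>R w))) (at s)"
    using has_derivative_compose assms[unfolded frechet_derivative_works] by blast
  moreover have "frechet_derivative f (at (q + s *\<^sub>R w)) (h *\<^sub>R w) = frechet_derivative f (at (q + s *\<^sub>R w)) w * h" for h
    using linear_frechet_derivative[OF assms] by (simp add: linear_scale)
  ultimately show ?thesis unfolding has_field_derivative_def by simp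
qed

lemma second_difference_mvt:
  fixes f :: "'a::real_normed_vector \<Rightarrow> real" and x u v :: 'a
  defines "F \<equiv> \<lambda>p. frechet_derivative f (at p) u"
  assumes t: "t > 0"
    and diff: "\<And>a b. 0 \<le> a \<Longrightarrow> a \<le> t \<Longrightarrow> 0 \<le> b \<Longrightarrow> b \<le> t \<Longrightarrow>
        f differentiable (at (x + a *\<^sub>R u + b *\<^sub>R v)) \<and> F differentiable (at (x + a *\<^sub>R u + b *\<^sub>R v))"
  shows "\<exists>a b. 0 < a \<and> a < t \<and> 0 < b \<and> b < t \<and>
    f (x + t *\<^sub>R u + t *\<^sub>R v) - f (x + t *\<^sub>R u) - f (x + t *\<^sub>R v) + f x =
    t * t * frechet_derivative F (at (x + a *\<^sub>R u + b *\<^sub>R v)) v"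
proof -
  define \<phi> where "\<phi> = (\<lambda>s. f ((x + t *\<^sub>R v) + s *\<^sub>R u) - f (x + s *\<^sub>R u))"
  have "\<exists>a. 0 < a \<and> a < t \<and> \<phi> t - \<phi> 0 = (t - 0) * (F (x + t *\<^sub>R v + a *\<^sub>R u) - F (x + a *\<^sub>R u))"
  proof (rule MVT2[OF t])
    fix s :: real assume s: "0 \<le> s" "s \<le> t"
    have swap: "x + t *\<^sub>R v + s *\<^sub>R u = x + s *\<^sub>R u + t *\<^sub>R v" by (simp add: algebra_simps)
    have "f differentiable (at (x + t *\<^sub>R v + s *\<^sub>R u))" "f differentiable (at (x + s *\<^sub>R u))"
      using diff[of s t] diff[of s 0] s t unfolding swap by auto
    then show "(\<phi> has_real_derivative (F (x + t *\<^sub>R v + s *\<^sub>R u) - F (x + s *\<^sub>R u))) (at s)"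
      unfolding \<phi>_def F_def by (intro DERIV_diff has_real_derivative_along_line)
  qed
  then obtain a where a: "0 < a" "a < t" and
    Ea: "\<phi> t - \<phi> 0 = t * (F (x + a *\<^sub>R u + t *\<^sub>R v) - F (x + a *\<^sub>R u))"
    by (auto simp: algebra_simps)
  have "\<exists>b. 0 < b \<and> b < t \<and> F (x + a *\<^sub>R u + t *\<^sub>R v) - F (x + a *\<^sub>R u + 0 *\<^sub>R v)
        = (t - 0) * frechet_derivative F (at (x + a *\<^sub>R u + b *\<^sub>R v)) v"
  proof (rule MVT2[OF t])
    fix r :: real assume "0 \<le> r" "r \<le> t"
    then have "F differentiable (at (x + a *\<^sub>R u + r *\<^sub>R v))" using diff[of a r] a by auto
    then show "((\<lambda>r. F (x + a *\<^sub>R u + r *\<^sub>R v)) has_real_derivative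
        frechet_derivative F (at (x + a *\<^sub>R u + r *\<^sub>R v)) v) (at r)"
      by (rule has_real_derivative_along_line)
  qed
  then obtain b where b: "0 < b" "b < t" and
    Eb: "F (x + a *\<^sub>R u + t *\<^sub>R v) - F (x + a *\<^sub>R u) = t * frechet_derivative F (at (x + a *\<^sub>R u + b *\<^sub>R v)) v"
    by auto
  have "f (x + t *\<^sub>R u + t *\<^sub>R v) - f (x + t *\<^sub>R u) - f (x + t *\<^sub>R v) + f x = \<phi> t - \<phi> 0"
    unfolding \<phi>_def by (simp add: algebra_simps)
  then show ?thesis using a b Ea Eb by auto
qed

lemma pd_eq_frechet: "pd i f = (\<lambda>p. frechet_derivative f (at p) (axis i 1))"
  by (rule ext) (simp add: pd_def)

lemma second_difference_axes:
  fixes f :: "real^'n::finite \<Rightarrow> real"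
  assumes f: "differentiable_upto 2 U f" and t: "t > 0"
    and square: "\<And>a b. 0 \<le> a \<Longrightarrow> a \<le> t \<Longrightarrow> 0 \<le> b \<Longrightarrow> b \<le> t \<Longrightarrow>
        x + a *\<^sub>R axis k 1 + b *\<^sub>R axis l 1 \<in> U"
  shows "\<exists>a b. 0 < a \<and> a < t \<and> 0 < b \<and> b < t \<and>
      f (x + t *\<^sub>R axis k 1 + t *\<^sub>R axis l 1) - f (x + t *\<^sub>R axis k 1) - f (x + t *\<^sub>R axis l 1) + f x =
      t * t * pd l (pd k f) (x + a *\<^sub>R axis k 1 + b *\<^sub>R axis l 1)"
proof -
  have "\<forall>p\<in>U. f differentiable (at p)" "\<forall>p\<in>U. pd k f differentiable (at p)"
    using f by (simp_all add: numeral_2_eq_2)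
  then show ?thesis
    using second_difference_mvt[OF t, where f=f and x=x and u="axis k 1" and v="axis l 1"] square
    by (simp add: pd_eq_frechet)
qed

lemma mixed_partials_approx:
  fixes f :: "real^'n::finite \<Rightarrow> real"
  assumes U: "open U" and x: "x \<in> U" and f: "differentiable_upto 2 U f" and d: "d > 0"
  shows "\<exists>p q. dist p x < d \<and> dist q x < d \<and> pd j (pd i f) p = pd i (pd j f) q"
proof -
  obtain r where r: "r > 0" "ball x r \<subseteq> U" using U x open_contains_ball by blast
  define t where "t = min d r / 4"
  have t: "t > 0" unfolding t_def using d r by auto
  have near: "dist (x + a *\<^sub>R axis k 1 + b *\<^sub>R axis l 1) x < min d r"
    if "0 \<le> a" "a \<le> t" "0 \<le> b" "b \<le> t" for a b and k l :: 'n
  proof -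
    have "dist (x + a *\<^sub>R axis k 1 + b *\<^sub>R axis l 1) x \<le> norm (a *\<^sub>R axis k (1::real)) + norm (b *\<^sub>R axis l (1::real))"
      unfolding dist_norm using norm_triangle_ineq[of "a *\<^sub>R axis k (1::real)" "b *\<^sub>R axis l 1"] by simp
    also have "\<dots> = a + b" using that by simp
    finally show ?thesis using that t unfolding t_def by linarith
  qed
  have second_difference: "\<exists>a b. 0 < a \<and> a < t \<and> 0 < b \<and> b < t \<and>
      f (x + t *\<^sub>R axis k 1 + t *\<^sub>R axis l 1) - f (x + t *\<^sub>R axis k 1) - f (x + t *\<^sub>R axis l 1) + f x =
      t * t * pd l (pd k f) (x + a *\<^sub>R axis k 1 + b *\<^sub>R axis l 1)" for k l
    using near r f by (intro second_difference_axes[OF _ t]) (auto simp: dist_commute subset_iff)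
  obtain a1 b1 where ab1: "0 < a1" "a1 < t" "0 < b1" "b1 < t" and
    E1: "f (x + t *\<^sub>R axis i 1 + t *\<^sub>R axis j 1) - f (x + t *\<^sub>R axis i 1) - f (x + t *\<^sub>R axis j 1) + f x =
         t * t * pd j (pd i f) (x + a1 *\<^sub>R axis i 1 + b1 *\<^sub>R axis j 1)"
    using second_difference[of i j] by blast
  obtain a2 b2 where ab2: "0 < a2" "a2 < t" "0 < b2" "b2 < t" and
    E2: "f (x + t *\<^sub>R axis j 1 + t *\<^sub>R axis i 1) - f (x + t *\<^sub>R axis j 1) - f (x + t *\<^sub>R axis i 1) + f x =
         t * t * pd i (pd j f) (x + a2 *\<^sub>R axis j 1 + b2 *\<^sub>R axis i 1)"
    using second_difference[of j i] by blast
  have swap: "x + t *\<^sub>R axis j 1 + t *\<^sub>R axis i 1 = x + t *\<^sub>R axis i 1 + t *\<^sub>R (axis j 1 :: real^'n)"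
    by (simp add: algebra_simps)
  have "t * t * pd j (pd i f) (x + a1 *\<^sub>R axis i 1 + b1 *\<^sub>R axis j 1)
      = t * t * pd i (pd j f) (x + a2 *\<^sub>R axis j 1 + b2 *\<^sub>R axis i 1)"
    using E1 E2 unfolding swap by linarith
  then have "pd j (pd i f) (x + a1 *\<^sub>R axis i 1 + b1 *\<^sub>R axis j 1) = pd i (pd j f) (x + a2 *\<^sub>R axis j 1 + b2 *\<^sub>R axis i 1)"
    using t by simp
  moreover have "dist (x + a1 *\<^sub>R axis i 1 + b1 *\<^sub>R axis j 1) x < d" "dist (x + a2 *\<^sub>R axis j 1 + b2 *\<^sub>R axis i 1) x < d"
    using near[of a1 b1 i j] near[of a2 b2 j i] ab1 ab2 by auto
  ultimately show ?thesis by blast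
qed

theorem schwarz:
  fixes f :: "real^'n::finite \<Rightarrow> real"
  assumes U: "open U" and x: "x \<in> U" and f: "differentiable_upto 2 U f"
  shows "pd i (pd j f) x = pd j (pd i f) x"
proof (rule ccontr)
  define D1 where "D1 = pd j (pd i f)"
  define D2 where "D2 = pd i (pd j f)"
  define \<epsilon> where "\<epsilon> = \<bar>D1 x - D2 x\<bar> / 2"
  assume "pd i (pd j f) x \<noteq> pd j (pd i f) x"
  then have \<epsilon>: "\<epsilon> > 0" unfolding \<epsilon>_def D1_def D2_def by auto
  have "continuous (at x) D1" "continuous (at x) D2"
    using f x unfolding D1_def D2_def by (simp_all add: numeral_2_eq_2 differentiable_imp_continuous_within)
  then obtain d1 d2 where d: "d1 > 0" "d2 > 0"
    and "\<And>p. dist p x < d1 \<Longrightarrow> dist (D1 p) (D1 x) < \<epsilon>" "\<And>p. dist p x < d2 \<Longrightarrow> dist (D2 p) (D2 x) < \<epsilon>"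
    using \<epsilon> unfolding continuous_at_eps_delta by metis
  moreover obtain p q where "dist p x < min d1 d2" "dist q x < min d1 d2" "D1 p = D2 q"
    using mixed_partials_approx[OF U x f, of "min d1 d2" j i] d unfolding D1_def D2_def by auto
  ultimately have "\<bar>D1 x - D2 x\<bar> < 2 * \<epsilon>" by (fastforce simp: dist_real_def)
  then show False unfolding \<epsilon>_def by simp
qed

corollary schwarz_smooth:
  "open U \<Longrightarrow> x \<in> U \<Longrightarrow> smooth_on f U \<Longrightarrow> pd i (pd j f) x = pd j (pd i f) x"
  using schwarz smooth_on_iff_differentiable_upto by blast

(* The inverse metric has entries det(...)/det(g) by Cramer's rule, with det(g) ~= 0 by
   positive definiteness; so it is smooth, and so are the Christoffel symbols and the
   Riemann and Ricci tensors. *)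
lemma det_nonzero_if_pos_def:
  fixes A :: "real^'n::finite^'n"
  assumes pos: "\<forall>v::real^'n. v \<noteq> 0 \<longrightarrow> (\<Sum>i\<in>UNIV. \<Sum>j\<in>UNIV. A$i$j * v$i * v$j) > 0"
  shows "det A \<noteq> 0"
proof -
  have "x = 0" if "A *v x = 0" for x
  proof -
    have "(\<Sum>i\<in>UNIV. \<Sum>j\<in>UNIV. A$i$j * x$i * x$j) = (\<Sum>i\<in>UNIV. x$i * (A *v x)$i)"
      by (simp add: matrix_vector_mult_def sum_distrib_left algebra_simps)
    then show "x = 0" using pos that by force
  qed
  then have "invertible A"
    using matrix_left_invertible_ker invertible_left_inverse by blast
  then show ?thesis using invertible_det_nz by blast
qed

lemma matrix_inv_entry_cramer:
  fixes A :: "real^'n::finite^'n"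
  assumes d: "det A \<noteq> 0"
  shows "matrix_inv A $ i $ j = det (\<chi> r s. if s = i then (if r = j then 1 else 0) else A$r$s) / det A"
proof -
  have "A ** matrix_inv A = mat 1"
    using d invertible_det_nz unfolding invertible_def matrix_inv_def by (metis (mono_tags, lifting) someI_ex)
  then have "A *v (\<chi> k. matrix_inv A $ k $ j) = (\<chi> r. if r = j then 1 else 0)"
    by (simp add: vec_eq_iff matrix_vector_mult_def matrix_matrix_mult_def mat_def)
  then have "(\<chi> k. matrix_inv A $ k $ j) = (\<chi> k. det (\<chi> r s. if s = k then (\<chi> r. if r = j then 1 else 0) $ r else A$r$s) / det A)"
    using cramer[OF d] by blast
  then show ?thesis by (simp add: vec_eq_iff cong: if_cong)
qed

context
  fixes U :: "(real^'n::finite) set" and g :: "real^'n \<Rightarrow> 'n \<Rightarrow> 'n \<Rightarrow> real"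
  assumes U: "open U" and metric: "riemannian_metric g U"
begin

lemma metric_smooth: "smooth_on (\<lambda>y. g y i j) U"
  using metric unfolding riemannian_metric_def by blast

lemma metric_sym: "y \<in> U \<Longrightarrow> g y i j = g y j i"
  using metric unfolding riemannian_metric_def by blast

lemma metric_det_nonzero: "y \<in> U \<Longrightarrow> det (\<chi> k l. g y k l) \<noteq> 0"
  using metric unfolding riemannian_metric_def by (intro det_nonzero_if_pos_def) auto

lemma ginv_smooth: "smooth_on (\<lambda>y. ginv g y i j) U"
proof -
  have "smooth_on (\<lambda>y. det (\<chi> r s. if s = i then (if r = j then 1 else 0) else g y r s) / det (\<chi> k l. g y k l)) U"
    using metric_det_nonzero
    by (intro smooth_divide[OF U] smooth_det[OF U]) (auto intro!: smooth_if[OF U] smooth_const[OF U] metric_smooth)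
  then show ?thesis
    by (rule smooth_local[OF U]) (simp add: ginv_def matrix_inv_entry_cramer[OF metric_det_nonzero] cong: if_cong)
qed

lemma Christoffel_smooth: "smooth_on (\<lambda>y. Christoffel g y b c d) U"
  unfolding Christoffel_def
  by (intro smooth_mult[OF U] smooth_const[OF U] smooth_sum[OF U] finite_UNIV smooth_add[OF U]
      smooth_diff[OF U] ginv_smooth smooth_pd metric_smooth) auto

lemma Christoffel_sym:
  assumes y: "y \<in> U"
  shows "Christoffel g y b c d = Christoffel g y c b d"
proof -
  have "pd e (\<lambda>y. g y b c) y = pd e (\<lambda>y. g y c b) y" for e
    by (rule pd_local[OF U y]) (simp add: metric_sym)
  then show ?thesis unfolding Christoffel_def by (simp add: algebra_simps)
qed

lemma Riem_smooth: "smooth_on (\<lambda>y. Riem g y a b c d) U"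
  unfolding Riem_def
  by (intro smooth_mult[OF U] smooth_sum[OF U] finite_UNIV smooth_add[OF U] smooth_diff[OF U]
      smooth_pd Christoffel_smooth) auto

lemma Ric_smooth: "smooth_on (\<lambda>y. Ric g y a c) U"
  unfolding Ric_def by (intro smooth_sum[OF U] Riem_smooth) auto

end

lemma sum_rotate3:
  "(\<Sum>a\<in>A. \<Sum>b\<in>B. \<Sum>c\<in>C. F a b c) = (\<Sum>c\<in>C. \<Sum>a\<in>A. \<Sum>b\<in>B. F a b c)"
proof -
  have "(\<Sum>a\<in>A. \<Sum>b\<in>B. \<Sum>c\<in>C. F a b c) = (\<Sum>a\<in>A. \<Sum>c\<in>C. \<Sum>b\<in>B. F a b c)"
    by (rule sum.cong[OF refl], rule sum.swap)
  also have "\<dots> = (\<Sum>c\<in>C. \<Sum>a\<in>A. \<Sum>b\<in>B. F a b c)"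
    by (rule sum.swap)
  finally show ?thesis .
qed

lemma sum_reverse3:
  "(\<Sum>a\<in>A. \<Sum>b\<in>B. \<Sum>c\<in>C. F a b c) = (\<Sum>c\<in>C. \<Sum>b\<in>B. \<Sum>a\<in>A. F a b c)"
  unfolding sum_rotate3[of F] by (rule sum.cong[OF refl], rule sum.swap)

(* The 2-jet at a point of a symmetric connection: the values G a b c = Gamma_ab^c and
   their first and second partial derivatives dG q a b c, ddG r q a b c.  All curvature
   identities needed are polynomial identities in these numbers. *)
locale torsion_free_jet =
  fixes G :: "'n::finite \<Rightarrow> 'n \<Rightarrow> 'n \<Rightarrow> real"
    and dG :: "'n \<Rightarrow> 'n \<Rightarrow> 'n \<Rightarrow> 'n \<Rightarrow> real"
    and ddG :: "'n \<Rightarrow> 'n \<Rightarrow> 'n \<Rightarrow> 'n \<Rightarrow> 'n \<Rightarrow> real"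
  assumes G_sym: "G a b c = G b a c"
    and dG_sym: "dG q a b c = dG q b a c"
    and ddG_sym_derivs: "ddG r q a b c = ddG q r a b c"
    and ddG_sym: "ddG r q a b c = ddG r q b a c"
begin

definition R where
  "R a b c d = dG a b c d - dG b a c d - (\<Sum>k\<in>UNIV. G a c k * G b k d) + (\<Sum>k\<in>UNIV. G a k d * G b c k)"

definition dR where
  "dR q a b c d = ddG q a b c d - ddG q b a c d
     - (\<Sum>k\<in>UNIV. dG q a c k * G b k d + G a c k * dG q b k d)
     + (\<Sum>k\<in>UNIV. dG q a k d * G b c k + G a k d * dG q b c k)"

definition Rc where "Rc a c = (\<Sum>b\<in>UNIV. R a b c b)"

definition dRc where "dRc q a c = (\<Sum>b\<in>UNIV. dR q a b c b)"

definition nabla_Rc where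
  "nabla_Rc q a c = dRc q a c - (\<Sum>k\<in>UNIV. G q a k * Rc k c) - (\<Sum>k\<in>UNIV. G q c k * Rc a k)"

definition div_R where
  "div_R b c e = (\<Sum>m\<in>UNIV. dR m b c e m
     - (\<Sum>k\<in>UNIV. G m b k * R k c e m) - (\<Sum>k\<in>UNIV. G m c k * R b k e m)
     - (\<Sum>k\<in>UNIV. G m e k * R b c k m) + (\<Sum>k\<in>UNIV. G m k m * R b c e k))"

lemma R_antisym: "R a b c d = - R b a c d"
  unfolding R_def by (simp add: mult.commute)

lemma first_bianchi: "R a b c d + R b c a d + R c a b d = 0"
proof -
  have "dG a b c d = dG a c b d" "dG b c a d = dG b a c d" "dG c a b d = dG c b a d"
    using dG_sym by blast+
  moreover have "(\<Sum>k\<in>UNIV. G a c k * G b k d) = (\<Sum>k\<in>UNIV. G b k d * G c a k)"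
    by (simp add: G_sym[of a c] mult.commute)
  moreover have "(\<Sum>k\<in>UNIV. G b a k * G c k d) = (\<Sum>k\<in>UNIV. G c k d * G a b k)"
    by (simp add: G_sym[of a b] mult.commute)
  moreover have "(\<Sum>k\<in>UNIV. G c b k * G a k d) = (\<Sum>k\<in>UNIV. G a k d * G b c k)"
    by (simp add: G_sym[of c b] mult.commute)
  ultimately show ?thesis unfolding R_def by linarith
qed

lemma div_R_expansion:
  "div_R b c e =
    ((\<Sum>m\<in>UNIV. ddG m b c e m) - (\<Sum>m\<in>UNIV. ddG m c b e m)
       - (\<Sum>m\<in>UNIV. \<Sum>k\<in>UNIV. dG m b e k * G c k m)
       - (\<Sum>m\<in>UNIV. \<Sum>k\<in>UNIV. G b e k * dG m c k m)
       + (\<Sum>m\<in>UNIV. \<Sum>k\<in>UNIV. dG m b k m * G c e k)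
       + (\<Sum>m\<in>UNIV. \<Sum>k\<in>UNIV. G b k m * dG m c e k))
    - ((\<Sum>m\<in>UNIV. \<Sum>k\<in>UNIV. G m b k * dG k c e m)
       - (\<Sum>m\<in>UNIV. \<Sum>k\<in>UNIV. G m b k * dG c k e m)
       - (\<Sum>m\<in>UNIV. \<Sum>k\<in>UNIV. \<Sum>l\<in>UNIV. G m b k * (G k e l * G c l m))
       + (\<Sum>m\<in>UNIV. \<Sum>k\<in>UNIV. \<Sum>l\<in>UNIV. G m b k * (G k l m * G c e l)))
    - ((\<Sum>m\<in>UNIV. \<Sum>k\<in>UNIV. G m c k * dG b k e m)
       - (\<Sum>m\<in>UNIV. \<Sum>k\<in>UNIV. G m c k * dG k b e m)
       - (\<Sum>m\<in>UNIV. \<Sum>k\<in>UNIV. \<Sum>l\<in>UNIV. G m c k * (G b e l * G k l m))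
       + (\<Sum>m\<in>UNIV. \<Sum>k\<in>UNIV. \<Sum>l\<in>UNIV. G m c k * (G b l m * G k e l)))
    - ((\<Sum>m\<in>UNIV. \<Sum>k\<in>UNIV. G m e k * dG b c k m)
       - (\<Sum>m\<in>UNIV. \<Sum>k\<in>UNIV. G m e k * dG c b k m)
       - (\<Sum>m\<in>UNIV. \<Sum>k\<in>UNIV. \<Sum>l\<in>UNIV. G m e k * (G b k l * G c l m))
       + (\<Sum>m\<in>UNIV. \<Sum>k\<in>UNIV. \<Sum>l\<in>UNIV. G m e k * (G b l m * G c k l)))
    + ((\<Sum>m\<in>UNIV. \<Sum>k\<in>UNIV. G m k m * dG b c e k)
       - (\<Sum>m\<in>UNIV. \<Sum>k\<in>UNIV. G m k m * dG c b e k)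
       - (\<Sum>m\<in>UNIV. \<Sum>k\<in>UNIV. \<Sum>l\<in>UNIV. G m k m * (G b e l * G c l k))
       + (\<Sum>m\<in>UNIV. \<Sum>k\<in>UNIV. \<Sum>l\<in>UNIV. G m k m * (G b l k * G c e l)))"
proof -
  have div_split: "div_R b c e = (\<Sum>m\<in>UNIV. dR m b c e m) - (\<Sum>m\<in>UNIV. \<Sum>k\<in>UNIV. G m b k * R k c e m) - (\<Sum>m\<in>UNIV. \<Sum>k\<in>UNIV. G m c k * R b k e m)
     - (\<Sum>m\<in>UNIV. \<Sum>k\<in>UNIV. G m e k * R b c k m) + (\<Sum>m\<in>UNIV. \<Sum>k\<in>UNIV. G m k m * R b c e k)"
    unfolding div_R_def by (simp add: sum.distrib sum_subtractf)
  have sum_dR: "(\<Sum>m\<in>UNIV. dR m b c e m) = (\<Sum>m\<in>UNIV. ddG m b c e m) - (\<Sum>m\<in>UNIV. ddG m c b e m)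
    - (\<Sum>m\<in>UNIV. \<Sum>k\<in>UNIV. dG m b e k * G c k m) - (\<Sum>m\<in>UNIV. \<Sum>k\<in>UNIV. G b e k * dG m c k m)
    + (\<Sum>m\<in>UNIV. \<Sum>k\<in>UNIV. dG m b k m * G c e k) + (\<Sum>m\<in>UNIV. \<Sum>k\<in>UNIV. G b k m * dG m c e k)"
    unfolding dR_def by (simp add: sum.distrib sum_subtractf)
  have Gamma_R1: "(\<Sum>m\<in>UNIV. \<Sum>k\<in>UNIV. G m b k * R k c e m) = (\<Sum>m\<in>UNIV. \<Sum>k\<in>UNIV. G m b k * dG k c e m) - (\<Sum>m\<in>UNIV. \<Sum>k\<in>UNIV. G m b k * dG c k e m)
     - (\<Sum>m\<in>UNIV. \<Sum>k\<in>UNIV. \<Sum>l\<in>UNIV. G m b k * (G k e l * G c l m)) + (\<Sum>m\<in>UNIV. \<Sum>k\<in>UNIV. \<Sum>l\<in>UNIV. G m b k * (G k l m * G c e l))"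
    unfolding R_def by (simp add: sum.distrib sum_subtractf sum_distrib_left ring_distribs)
  have Gamma_R2: "(\<Sum>m\<in>UNIV. \<Sum>k\<in>UNIV. G m c k * R b k e m) = (\<Sum>m\<in>UNIV. \<Sum>k\<in>UNIV. G m c k * dG b k e m) - (\<Sum>m\<in>UNIV. \<Sum>k\<in>UNIV. G m c k * dG k b e m)
     - (\<Sum>m\<in>UNIV. \<Sum>k\<in>UNIV. \<Sum>l\<in>UNIV. G m c k * (G b e l * G k l m)) + (\<Sum>m\<in>UNIV. \<Sum>k\<in>UNIV. \<Sum>l\<in>UNIV. G m c k * (G b l m * G k e l))"
    unfolding R_def by (simp add: sum.distrib sum_subtractf sum_distrib_left ring_distribs)
  have Gamma_R3: "(\<Sum>m\<in>UNIV. \<Sum>k\<in>UNIV. G m e k * R b c k m) = (\<Sum>m\<in>UNIV. \<Sum>k\<in>UNIV. G m e k * dG b c k m) - (\<Sum>m\<in>UNIV. \<Sum>k\<in>UNIV. G m e k * dG c b k m)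
     - (\<Sum>m\<in>UNIV. \<Sum>k\<in>UNIV. \<Sum>l\<in>UNIV. G m e k * (G b k l * G c l m)) + (\<Sum>m\<in>UNIV. \<Sum>k\<in>UNIV. \<Sum>l\<in>UNIV. G m e k * (G b l m * G c k l))"
    unfolding R_def by (simp add: sum.distrib sum_subtractf sum_distrib_left ring_distribs)
  have Gamma_R4: "(\<Sum>m\<in>UNIV. \<Sum>k\<in>UNIV. G m k m * R b c e k) = (\<Sum>m\<in>UNIV. \<Sum>k\<in>UNIV. G m k m * dG b c e k) - (\<Sum>m\<in>UNIV. \<Sum>k\<in>UNIV. G m k m * dG c b e k)
     - (\<Sum>m\<in>UNIV. \<Sum>k\<in>UNIV. \<Sum>l\<in>UNIV. G m k m * (G b e l * G c l k)) + (\<Sum>m\<in>UNIV. \<Sum>k\<in>UNIV. \<Sum>l\<in>UNIV. G m k m * (G b l k * G c e l))"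
    unfolding R_def by (simp add: sum.distrib sum_subtractf sum_distrib_left ring_distribs)
  show ?thesis unfolding div_split sum_dR Gamma_R1 Gamma_R2 Gamma_R3 Gamma_R4 ..
qed

lemma nabla_Rc_antisym_expansion:
  "nabla_Rc c b e - nabla_Rc b c e =
    ((\<Sum>m\<in>UNIV. ddG c b m e m) - (\<Sum>m\<in>UNIV. ddG c m b e m)
       - (\<Sum>m\<in>UNIV. \<Sum>k\<in>UNIV. dG c b e k * G m k m)
       - (\<Sum>m\<in>UNIV. \<Sum>k\<in>UNIV. G b e k * dG c m k m)
       + (\<Sum>m\<in>UNIV. \<Sum>k\<in>UNIV. dG c b k m * G m e k)
       + (\<Sum>m\<in>UNIV. \<Sum>k\<in>UNIV. G b k m * dG c m e k))
    - ((\<Sum>m\<in>UNIV. ddG b c m e m) - (\<Sum>m\<in>UNIV. ddG b m c e m)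
       - (\<Sum>m\<in>UNIV. \<Sum>k\<in>UNIV. dG b c e k * G m k m)
       - (\<Sum>m\<in>UNIV. \<Sum>k\<in>UNIV. G c e k * dG b m k m)
       + (\<Sum>m\<in>UNIV. \<Sum>k\<in>UNIV. dG b c k m * G m e k)
       + (\<Sum>m\<in>UNIV. \<Sum>k\<in>UNIV. G c k m * dG b m e k))
    - ((\<Sum>k\<in>UNIV. \<Sum>m\<in>UNIV. G c e k * dG b m k m)
       - (\<Sum>k\<in>UNIV. \<Sum>m\<in>UNIV. G c e k * dG m b k m)
       - (\<Sum>k\<in>UNIV. \<Sum>m\<in>UNIV. \<Sum>l\<in>UNIV. G c e k * (G b k l * G m l m))
       + (\<Sum>k\<in>UNIV. \<Sum>m\<in>UNIV. \<Sum>l\<in>UNIV. G c e k * (G b l m * G m k l)))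
    + ((\<Sum>k\<in>UNIV. \<Sum>m\<in>UNIV. G b e k * dG c m k m)
       - (\<Sum>k\<in>UNIV. \<Sum>m\<in>UNIV. G b e k * dG m c k m)
       - (\<Sum>k\<in>UNIV. \<Sum>m\<in>UNIV. \<Sum>l\<in>UNIV. G b e k * (G c k l * G m l m))
       + (\<Sum>k\<in>UNIV. \<Sum>m\<in>UNIV. \<Sum>l\<in>UNIV. G b e k * (G c l m * G m k l)))"
proof -
  have nabla_split: "nabla_Rc c b e - nabla_Rc b c e = dRc c b e - dRc b c e - (\<Sum>k\<in>UNIV. G c e k * Rc b k) + (\<Sum>k\<in>UNIV. G b e k * Rc c k)"
  proof -
    have "(\<Sum>k\<in>UNIV. G c b k * Rc k e) = (\<Sum>k\<in>UNIV. G b c k * Rc k e)" by (simp add: G_sym[of c b])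
    then show ?thesis unfolding nabla_Rc_def by simp
  qed
  have dRc_cb: "dRc c b e = (\<Sum>m\<in>UNIV. ddG c b m e m) - (\<Sum>m\<in>UNIV. ddG c m b e m)
    - (\<Sum>m\<in>UNIV. \<Sum>k\<in>UNIV. dG c b e k * G m k m) - (\<Sum>m\<in>UNIV. \<Sum>k\<in>UNIV. G b e k * dG c m k m)
    + (\<Sum>m\<in>UNIV. \<Sum>k\<in>UNIV. dG c b k m * G m e k) + (\<Sum>m\<in>UNIV. \<Sum>k\<in>UNIV. G b k m * dG c m e k)"
    unfolding dRc_def dR_def by (simp add: sum.distrib sum_subtractf)
  have dRc_bc: "dRc b c e = (\<Sum>m\<in>UNIV. ddG b c m e m) - (\<Sum>m\<in>UNIV. ddG b m c e m)
    - (\<Sum>m\<in>UNIV. \<Sum>k\<in>UNIV. dG b c e k * G m k m) - (\<Sum>m\<in>UNIV. \<Sum>k\<in>UNIV. G c e k * dG b m k m)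
    + (\<Sum>m\<in>UNIV. \<Sum>k\<in>UNIV. dG b c k m * G m e k) + (\<Sum>m\<in>UNIV. \<Sum>k\<in>UNIV. G c k m * dG b m e k)"
    unfolding dRc_def dR_def by (simp add: sum.distrib sum_subtractf)
  have Gamma_Rc_b: "(\<Sum>k\<in>UNIV. G c e k * Rc b k) = (\<Sum>k\<in>UNIV. \<Sum>m\<in>UNIV. G c e k * dG b m k m) - (\<Sum>k\<in>UNIV. \<Sum>m\<in>UNIV. G c e k * dG m b k m)
     - (\<Sum>k\<in>UNIV. \<Sum>m\<in>UNIV. \<Sum>l\<in>UNIV. G c e k * (G b k l * G m l m)) + (\<Sum>k\<in>UNIV. \<Sum>m\<in>UNIV. \<Sum>l\<in>UNIV. G c e k * (G b l m * G m k l))"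
    unfolding Rc_def R_def by (simp add: sum.distrib sum_subtractf sum_distrib_left ring_distribs)
  have Gamma_Rc_c: "(\<Sum>k\<in>UNIV. G b e k * Rc c k) = (\<Sum>k\<in>UNIV. \<Sum>m\<in>UNIV. G b e k * dG c m k m) - (\<Sum>k\<in>UNIV. \<Sum>m\<in>UNIV. G b e k * dG m c k m)
     - (\<Sum>k\<in>UNIV. \<Sum>m\<in>UNIV. \<Sum>l\<in>UNIV. G b e k * (G c k l * G m l m)) + (\<Sum>k\<in>UNIV. \<Sum>m\<in>UNIV. \<Sum>l\<in>UNIV. G b e k * (G c l m * G m k l))"
    unfolding Rc_def R_def by (simp add: sum.distrib sum_subtractf sum_distrib_left ring_distribs)
  show ?thesis unfolding nabla_split dRc_cb dRc_bc Gamma_Rc_b Gamma_Rc_c ..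
qed

(* Contracted second Bianchi identity: nabla_m R_bce^m = nabla_c Ric_be - nabla_b Ric_ce.
   The two expansions agree after symmetrising second derivatives and reindexing sums. *)
lemma contracted_bianchi: "div_R b c e = nabla_Rc c b e - nabla_Rc b c e"
proof -
  have e1: "(\<Sum>m\<in>UNIV. ddG c b m e m) = (\<Sum>m\<in>UNIV. ddG b c m e m)" by (simp add: ddG_sym_derivs[of c b])
  have e2: "(\<Sum>m\<in>UNIV. ddG c m b e m) = (\<Sum>m\<in>UNIV. ddG m c b e m)" by (simp add: ddG_sym_derivs[of c])
  have e3: "(\<Sum>m\<in>UNIV. ddG b m c e m) = (\<Sum>m\<in>UNIV. ddG m b c e m)" by (simp add: ddG_sym_derivs[of b])
  have f1: "(\<Sum>m\<in>UNIV. \<Sum>k\<in>UNIV. G m k m * dG b c e k) = (\<Sum>m\<in>UNIV. \<Sum>k\<in>UNIV. dG b c e k * G m k m)" by (simp add: mult.commute)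
  have f2: "(\<Sum>m\<in>UNIV. \<Sum>k\<in>UNIV. G m k m * dG c b e k) = (\<Sum>m\<in>UNIV. \<Sum>k\<in>UNIV. dG c b e k * G m k m)" by (simp add: mult.commute)
  have f3: "(\<Sum>m\<in>UNIV. \<Sum>k\<in>UNIV. G m e k * dG b c k m) = (\<Sum>m\<in>UNIV. \<Sum>k\<in>UNIV. dG b c k m * G m e k)" by (simp add: mult.commute)
  have f4: "(\<Sum>m\<in>UNIV. \<Sum>k\<in>UNIV. G m e k * dG c b k m) = (\<Sum>m\<in>UNIV. \<Sum>k\<in>UNIV. dG c b k m * G m e k)" by (simp add: mult.commute)
  have f5: "(\<Sum>m\<in>UNIV. \<Sum>k\<in>UNIV. G b e k * dG c m k m) = (\<Sum>k\<in>UNIV. \<Sum>m\<in>UNIV. G b e k * dG c m k m)" by (rule sum.swap)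
  have f6: "(\<Sum>m\<in>UNIV. \<Sum>k\<in>UNIV. G c e k * dG b m k m) = (\<Sum>k\<in>UNIV. \<Sum>m\<in>UNIV. G c e k * dG b m k m)" by (rule sum.swap)
  have f7: "(\<Sum>m\<in>UNIV. \<Sum>k\<in>UNIV. G b e k * dG m c k m) = (\<Sum>k\<in>UNIV. \<Sum>m\<in>UNIV. G b e k * dG m c k m)" by (rule sum.swap)
  have f8: "(\<Sum>m\<in>UNIV. \<Sum>k\<in>UNIV. dG m b k m * G c e k) = (\<Sum>k\<in>UNIV. \<Sum>m\<in>UNIV. G c e k * dG m b k m)"
    by (rule trans[OF sum.swap]) (simp add: mult.commute)
  have f9: "(\<Sum>m\<in>UNIV. \<Sum>k\<in>UNIV. G m b k * dG k c e m) = (\<Sum>m\<in>UNIV. \<Sum>k\<in>UNIV. G b k m * dG m c e k)"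
    by (rule trans[OF sum.swap]) (simp add: G_sym[of _ b])
  have f10: "(\<Sum>m\<in>UNIV. \<Sum>k\<in>UNIV. G m c k * dG k b e m) = (\<Sum>m\<in>UNIV. \<Sum>k\<in>UNIV. dG m b e k * G c k m)"
    by (rule trans[OF sum.swap]) (simp add: G_sym[of _ c] mult.commute)
  have f11: "(\<Sum>m\<in>UNIV. \<Sum>k\<in>UNIV. G m b k * dG c k e m) = (\<Sum>m\<in>UNIV. \<Sum>k\<in>UNIV. G b k m * dG c m e k)"
    by (rule trans[OF sum.swap]) (simp add: G_sym[of _ b])
  have f12: "(\<Sum>m\<in>UNIV. \<Sum>k\<in>UNIV. G m c k * dG b k e m) = (\<Sum>m\<in>UNIV. \<Sum>k\<in>UNIV. G c k m * dG b m e k)"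
    by (rule trans[OF sum.swap]) (simp add: G_sym[of _ c])
  have g1: "(\<Sum>m\<in>UNIV. \<Sum>k\<in>UNIV. \<Sum>l\<in>UNIV. G m k m * (G b l k * G c e l)) = (\<Sum>k\<in>UNIV. \<Sum>m\<in>UNIV. \<Sum>l\<in>UNIV. G c e k * (G b k l * G m l m))"
    by (rule trans[OF sum_rotate3]) (simp add: G_sym mult_ac)
  have g2: "(\<Sum>m\<in>UNIV. \<Sum>k\<in>UNIV. \<Sum>l\<in>UNIV. G m k m * (G b e l * G c l k)) = (\<Sum>k\<in>UNIV. \<Sum>m\<in>UNIV. \<Sum>l\<in>UNIV. G b e k * (G c k l * G m l m))"
    by (rule trans[OF sum_rotate3]) (simp add: G_sym mult_ac)
  have g3: "(\<Sum>m\<in>UNIV. \<Sum>k\<in>UNIV. \<Sum>l\<in>UNIV. G m b k * (G k l m * G c e l)) = (\<Sum>k\<in>UNIV. \<Sum>m\<in>UNIV. \<Sum>l\<in>UNIV. G c e k * (G b l m * G m k l))"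
    by (rule trans[OF sum_reverse3]) (simp add: G_sym mult_ac)
  have g4: "(\<Sum>m\<in>UNIV. \<Sum>k\<in>UNIV. \<Sum>l\<in>UNIV. G m c k * (G b e l * G k l m)) = (\<Sum>k\<in>UNIV. \<Sum>m\<in>UNIV. \<Sum>l\<in>UNIV. G b e k * (G c l m * G m k l))"
    by (rule trans[OF sum_reverse3]) (simp add: G_sym mult_ac)
  have g5: "(\<Sum>m\<in>UNIV. \<Sum>k\<in>UNIV. \<Sum>l\<in>UNIV. G m e k * (G b l m * G c k l)) = (\<Sum>m\<in>UNIV. \<Sum>k\<in>UNIV. \<Sum>l\<in>UNIV. G m b k * (G k e l * G c l m))"
    by (rule trans[OF sum_rotate3]) (simp add: G_sym mult_ac)
  have g6: "(\<Sum>m\<in>UNIV. \<Sum>k\<in>UNIV. \<Sum>l\<in>UNIV. G m c k * (G b l m * G k e l)) = (\<Sum>m\<in>UNIV. \<Sum>k\<in>UNIV. \<Sum>l\<in>UNIV. G m e k * (G b k l * G c l m))"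
    by (rule trans[OF sum_rotate3[symmetric]]) (simp add: G_sym mult_ac)
  show ?thesis
    using div_R_expansion[of b c e] nabla_Rc_antisym_expansion[of c b e] e1 e2 e3 f1 f2 f3 f4 f5 f6 f7 f8 f9 f10 f11 f12 g1 g2 g3 g4 g5 g6 by linarith
qed

end

locale tensor2_jet = torsion_free_jet +
  fixes T :: "'a \<Rightarrow> 'a \<Rightarrow> real" and dT :: "'a \<Rightarrow> 'a \<Rightarrow> 'a \<Rightarrow> real"
    and ddT :: "'a \<Rightarrow> 'a \<Rightarrow> 'a \<Rightarrow> 'a \<Rightarrow> real"
  assumes ddT_sym: "ddT r q a b = ddT q r a b"
begin

definition nT where "nT q a b = dT q a b - (\<Sum>k\<in>UNIV. G q a k * T k b) - (\<Sum>k\<in>UNIV. G q b k * T a k)"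
definition dnT where "dnT r q a b = ddT r q a b - (\<Sum>k\<in>UNIV. dG r q a k * T k b + G q a k * dT r k b)
   - (\<Sum>k\<in>UNIV. dG r q b k * T a k + G q b k * dT r a k)"
definition nnT where "nnT r q a b = dnT r q a b - (\<Sum>k\<in>UNIV. G r q k * nT k a b) - (\<Sum>k\<in>UNIV. G r a k * nT q k b)
   - (\<Sum>k\<in>UNIV. G r b k * nT q a k)"

lemma nnT_expansion: "nnT p c b e = ddT p c b e - (\<Sum>k\<in>UNIV. dG p c b k * T k e) - (\<Sum>k\<in>UNIV. G c b k * dT p k e)
   - (\<Sum>k\<in>UNIV. dG p c e k * T b k) - (\<Sum>k\<in>UNIV. G c e k * dT p b k) - (\<Sum>k\<in>UNIV. G p c k * nT k b e)
   - (\<Sum>k\<in>UNIV. G p b k * dT c k e) + (\<Sum>k\<in>UNIV. \<Sum>l\<in>UNIV. G p b k * (G c k l * T l e)) + (\<Sum>k\<in>UNIV. \<Sum>l\<in>UNIV. G p b k * (G c e l * T k l))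
   - (\<Sum>k\<in>UNIV. G p e k * dT c b k) + (\<Sum>k\<in>UNIV. \<Sum>l\<in>UNIV. G p e k * (G c b l * T l k)) + (\<Sum>k\<in>UNIV. \<Sum>l\<in>UNIV. G p e k * (G c k l * T b l))"
  unfolding nnT_def dnT_def nT_def
  by (simp add: sum.distrib sum_subtractf sum_distrib_left ring_distribs)

lemma ricci_identity: "nnT p c b e - nnT c p b e = - (\<Sum>m\<in>UNIV. R p c b m * T m e) - (\<Sum>m\<in>UNIV. R p c e m * T b m)"
proof -
  have r1: "(\<Sum>m\<in>UNIV. R p c b m * T m e) = (\<Sum>m\<in>UNIV. dG p c b m * T m e) - (\<Sum>m\<in>UNIV. dG c p b m * T m e)
    - (\<Sum>m\<in>UNIV. \<Sum>l\<in>UNIV. G p b l * (G c l m * T m e)) + (\<Sum>m\<in>UNIV. \<Sum>l\<in>UNIV. G p l m * (G c b l * T m e))"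
    unfolding R_def by (simp add: sum.distrib sum_subtractf sum_distrib_left sum_distrib_right ring_distribs mult_ac)
  have r2: "(\<Sum>m\<in>UNIV. R p c e m * T b m) = (\<Sum>m\<in>UNIV. dG p c e m * T b m) - (\<Sum>m\<in>UNIV. dG c p e m * T b m)
    - (\<Sum>m\<in>UNIV. \<Sum>l\<in>UNIV. G p e l * (G c l m * T b m)) + (\<Sum>m\<in>UNIV. \<Sum>l\<in>UNIV. G p l m * (G c e l * T b m))"
    unfolding R_def by (simp add: sum.distrib sum_subtractf sum_distrib_left sum_distrib_right ring_distribs mult_ac)
  have h1: "ddT p c b e = ddT c p b e" by (rule ddT_sym)
  have h2: "(\<Sum>k\<in>UNIV. G p c k * nT k b e) = (\<Sum>k\<in>UNIV. G c p k * nT k b e)" by (simp add: G_sym[of p c])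
  have h3: "(\<Sum>k\<in>UNIV. \<Sum>l\<in>UNIV. G p b k * (G c e l * T k l)) = (\<Sum>k\<in>UNIV. \<Sum>l\<in>UNIV. G c e k * (G p b l * T l k))"
    by (rule trans[OF sum.swap]) (simp add: mult_ac)
  have h4: "(\<Sum>k\<in>UNIV. \<Sum>l\<in>UNIV. G p e k * (G c b l * T l k)) = (\<Sum>k\<in>UNIV. \<Sum>l\<in>UNIV. G c b k * (G p e l * T k l))"
    by (rule trans[OF sum.swap]) (simp add: mult_ac)
  have h5: "(\<Sum>k\<in>UNIV. \<Sum>l\<in>UNIV. G p b k * (G c k l * T l e)) = (\<Sum>m\<in>UNIV. \<Sum>l\<in>UNIV. G p b l * (G c l m * T m e))"
    by (rule sum.swap)
  have h6: "(\<Sum>k\<in>UNIV. \<Sum>l\<in>UNIV. G c b k * (G p k l * T l e)) = (\<Sum>m\<in>UNIV. \<Sum>l\<in>UNIV. G p l m * (G c b l * T m e))"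
    by (rule trans[OF sum.swap]) (simp add: mult_ac)
  have h7: "(\<Sum>k\<in>UNIV. \<Sum>l\<in>UNIV. G p e k * (G c k l * T b l)) = (\<Sum>m\<in>UNIV. \<Sum>l\<in>UNIV. G p e l * (G c l m * T b m))"
    by (rule sum.swap)
  have h8: "(\<Sum>k\<in>UNIV. \<Sum>l\<in>UNIV. G c e k * (G p k l * T b l)) = (\<Sum>m\<in>UNIV. \<Sum>l\<in>UNIV. G p l m * (G c e l * T b m))"
    by (rule trans[OF sum.swap]) (simp add: mult_ac)
  show ?thesis using nnT_expansion[of p c b e] nnT_expansion[of c p b e] r1 r2 h1 h2 h3 h4 h5 h6 h7 h8 by linarith
qed

(* Cyclic form of the Ricci identity, simplified with the first Bianchi identity. *)
lemma ricci_identity_cyclic: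
  "(nnT p c b e - nnT c p b e) + (nnT b p c e - nnT p b c e) + (nnT c b p e - nnT b c p e)
   = (\<Sum>m\<in>UNIV. T p m * R b c e m) + (\<Sum>m\<in>UNIV. T b m * R c p e m) + (\<Sum>m\<in>UNIV. T c m * R p b e m)"
proof -
  have fb: "(\<Sum>m\<in>UNIV. R p c b m * T m e) + (\<Sum>m\<in>UNIV. R b p c m * T m e) + (\<Sum>m\<in>UNIV. R c b p m * T m e) = 0"
  proof -
    have "(\<Sum>m\<in>UNIV. R p c b m * T m e) + (\<Sum>m\<in>UNIV. R b p c m * T m e) + (\<Sum>m\<in>UNIV. R c b p m * T m e)
      = (\<Sum>m\<in>UNIV. (R p c b m + R c b p m + R b p c m) * T m e)"
      by (simp add: sum.distrib ring_distribs)
    also have "\<dots> = 0" by (simp add: first_bianchi)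
    finally show ?thesis .
  qed
  have a1: "(\<Sum>m\<in>UNIV. R p c e m * T b m) = - (\<Sum>m\<in>UNIV. T b m * R c p e m)"
    by (simp add: R_antisym[of p c] sum_negf mult.commute)
  have a2: "(\<Sum>m\<in>UNIV. R b p e m * T c m) = - (\<Sum>m\<in>UNIV. T c m * R p b e m)"
    by (simp add: R_antisym[of b p] sum_negf mult.commute)
  have a3: "(\<Sum>m\<in>UNIV. R c b e m * T p m) = - (\<Sum>m\<in>UNIV. T p m * R b c e m)"
    by (simp add: R_antisym[of c b] sum_negf mult.commute)
  show ?thesis using ricci_identity[of p c b e] ricci_identity[of b p c e] ricci_identity[of c b p e] fb a1 a2 a3 by linarith
qed

end

locale product_jet =
  fixes G :: "'n::finite \<Rightarrow> 'n \<Rightarrow> 'n \<Rightarrow> real"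
    and L :: "'n \<Rightarrow> real" and dL :: "'n \<Rightarrow> 'n \<Rightarrow> real"
    and K :: "'n \<Rightarrow> 'n \<Rightarrow> 'n \<Rightarrow> 'n \<Rightarrow> real" and dK :: "'n \<Rightarrow> 'n \<Rightarrow> 'n \<Rightarrow> 'n \<Rightarrow> 'n \<Rightarrow> real"
begin

definition nL where "nL q a = dL q a - (\<Sum>k\<in>UNIV. G q a k * L k)"

definition nK where
  "nK q a b c d = dK q a b c d - (\<Sum>k\<in>UNIV. G q a k * K k b c d) - (\<Sum>k\<in>UNIV. G q b k * K a k c d)
     - (\<Sum>k\<in>UNIV. G q c k * K a b k d) + (\<Sum>k\<in>UNIV. G q k d * K a b c k)"

definition W where "W a b c d e = L a * K b c d e"

definition dW where "dW q a b c d e = dL q a * K b c d e + L a * dK q b c d e"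

definition nW where
  "nW q a b c d e = dW q a b c d e - (\<Sum>k\<in>UNIV. G q a k * W k b c d e) - (\<Sum>k\<in>UNIV. G q b k * W a k c d e)
     - (\<Sum>k\<in>UNIV. G q c k * W a b k d e) - (\<Sum>k\<in>UNIV. G q d k * W a b c k e)
     + (\<Sum>k\<in>UNIV. G q k e * W a b c d k)"

definition D where "D b c e = (\<Sum>m\<in>UNIV. L m * K b c e m)"

definition dD where "dD q b c e = (\<Sum>m\<in>UNIV. dL q m * K b c e m + L m * dK q b c e m)"

definition nD where
  "nD q b c e = dD q b c e - (\<Sum>k\<in>UNIV. G q b k * D k c e) - (\<Sum>k\<in>UNIV. G q c k * D b k e)
     - (\<Sum>k\<in>UNIV. G q e k * D b c k)"

lemma nW_leibniz: "nW q a b c d e = nL q a * K b c d e + L a * nK q b c d e"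
  unfolding nW_def nL_def nK_def W_def dW_def
  by (simp add: sum_distrib_left sum_distrib_right ring_distribs sum_subtractf mult_ac)

lemma nD_leibniz: "nD q b c e = (\<Sum>m\<in>UNIV. nL q m * K b c e m + L m * nK q b c e m)"
proof -
  have e1: "nD q b c e = (\<Sum>m\<in>UNIV. dL q m * K b c e m) + (\<Sum>m\<in>UNIV. L m * dK q b c e m) - (\<Sum>k\<in>UNIV. \<Sum>m\<in>UNIV. G q b k * (L m * K k c e m))
     - (\<Sum>k\<in>UNIV. \<Sum>m\<in>UNIV. G q c k * (L m * K b k e m)) - (\<Sum>k\<in>UNIV. \<Sum>m\<in>UNIV. G q e k * (L m * K b c k m))"
    unfolding nD_def dD_def D_def by (simp add: sum.distrib sum_distrib_left)
  have e2: "(\<Sum>m\<in>UNIV. nL q m * K b c e m + L m * nK q b c e m) = (\<Sum>m\<in>UNIV. dL q m * K b c e m) - (\<Sum>m\<in>UNIV. \<Sum>k\<in>UNIV. G q m k * L k * K b c e m)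
     + (\<Sum>m\<in>UNIV. L m * dK q b c e m) - (\<Sum>m\<in>UNIV. \<Sum>k\<in>UNIV. L m * (G q b k * K k c e m)) - (\<Sum>m\<in>UNIV. \<Sum>k\<in>UNIV. L m * (G q c k * K b k e m))
     - (\<Sum>m\<in>UNIV. \<Sum>k\<in>UNIV. L m * (G q e k * K b c k m)) + (\<Sum>m\<in>UNIV. \<Sum>k\<in>UNIV. L m * (G q k m * K b c e k))"
    unfolding nL_def nK_def by (simp add: sum.distrib sum_subtractf sum_distrib_left sum_distrib_right ring_distribs)
  have s1: "(\<Sum>k\<in>UNIV. \<Sum>m\<in>UNIV. G q b k * (L m * K k c e m)) = (\<Sum>m\<in>UNIV. \<Sum>k\<in>UNIV. L m * (G q b k * K k c e m))"
    by (rule trans[OF sum.swap]) (simp add: mult_ac)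
  have s2: "(\<Sum>k\<in>UNIV. \<Sum>m\<in>UNIV. G q c k * (L m * K b k e m)) = (\<Sum>m\<in>UNIV. \<Sum>k\<in>UNIV. L m * (G q c k * K b k e m))"
    by (rule trans[OF sum.swap]) (simp add: mult_ac)
  have s3: "(\<Sum>k\<in>UNIV. \<Sum>m\<in>UNIV. G q e k * (L m * K b c k m)) = (\<Sum>m\<in>UNIV. \<Sum>k\<in>UNIV. L m * (G q e k * K b c k m))"
    by (rule trans[OF sum.swap]) (simp add: mult_ac)
  have s4: "(\<Sum>m\<in>UNIV. \<Sum>k\<in>UNIV. G q m k * L k * K b c e m) = (\<Sum>m\<in>UNIV. \<Sum>k\<in>UNIV. L m * (G q k m * K b c e k))"
    by (rule trans[OF sum.swap]) (simp add: mult_ac)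
  show ?thesis using e1 e2 s1 s2 s3 s4 by linarith
qed

lemma div_W_eq_nabla_D:
  assumes recurrent: "\<And>q a b c d. nK q a b c d = L q * K a b c d"
    and closed: "\<And>q a. nL q a = nL a q"
  shows "(\<Sum>m\<in>UNIV. nW m a b c e m) = nD a b c e"
  unfolding nW_leibniz nD_leibniz recurrent using closed by (simp add: mult_ac)

end

locale codazzi_jet =
  fixes G :: "'n::finite \<Rightarrow> 'n \<Rightarrow> 'n \<Rightarrow> real"
    and a :: "'n \<Rightarrow> 'n \<Rightarrow> real" and da :: "'n \<Rightarrow> 'n \<Rightarrow> 'n \<Rightarrow> real"
    and f :: "'n \<Rightarrow> real" and ddf :: "'n \<Rightarrow> 'n \<Rightarrow> real"
  assumes G_sym: "G p q r = G q p r"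
    and a_sym: "a p q = a q p"
    and ddf_sym: "ddf p q = ddf q p"
    and a_codazzi: "da q b c - (\<Sum>k\<in>UNIV. G q b k * a k c) - (\<Sum>k\<in>UNIV. G q c k * a b k)
                = da b q c - (\<Sum>k\<in>UNIV. G b q k * a k c) - (\<Sum>k\<in>UNIV. G b c k * a q k)"
begin

definition E where "E b c e = a b e * f c - a c e * f b"
definition dE where "dE p b c e = da p b e * f c + a b e * ddf p c - (da p c e * f b + a c e * ddf p b)"
definition nE where "nE p b c e = dE p b c e - (\<Sum>k\<in>UNIV. G p b k * E k c e) - (\<Sum>k\<in>UNIV. G p c k * E b k e) - (\<Sum>k\<in>UNIV. G p e k * E b c k)"

lemma nabla_E_cyclic: "nE p b c e + nE b c p e + nE c p b e = 0"
proof -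
  define na where "na q b c = da q b c - (\<Sum>k\<in>UNIV. G q b k * a k c) - (\<Sum>k\<in>UNIV. G q c k * a b k)" for q b c
  define H where "H p c = ddf p c - (\<Sum>k\<in>UNIV. G p c k * f k)" for p c
  have na_sym: "na q b c = na b q c" for q b c unfolding na_def using a_codazzi .
  have H_sym: "H p c = H c p" for p c unfolding H_def by (simp add: ddf_sym G_sym[of p c])
  have ex: "nE p b c e = na p b e * f c + a b e * H p c - na p c e * f b - a c e * H p b" for p b c e
    unfolding nE_def dE_def E_def na_def H_def
    by (simp add: sum_distrib_left sum_distrib_right ring_distribs sum_subtractf sum.distrib a_sym mult_ac)
  show ?thesis unfolding ex using na_sym[of p b e] na_sym[of b c e] na_sym[of c p e] H_sym[of p c] H_sym[of b p] H_sym[of c b]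
    by (simp add: algebra_simps)
qed

end

definition nabla02 :: "(real^'n::finite \<Rightarrow> 'n \<Rightarrow> 'n \<Rightarrow> real) \<Rightarrow> (real^'n \<Rightarrow> 'n \<Rightarrow> 'n \<Rightarrow> real)
    \<Rightarrow> real^'n \<Rightarrow> 'n \<Rightarrow> 'n \<Rightarrow> 'n \<Rightarrow> real" where
  "nabla02 g T y q a b = pd q (\<lambda>z. T z a b) y
     - (\<Sum>k\<in>UNIV. Christoffel g y q a k * T y k b) - (\<Sum>k\<in>UNIV. Christoffel g y q b k * T y a k)"

definition nabla03 :: "(real^'n::finite \<Rightarrow> 'n \<Rightarrow> 'n \<Rightarrow> real) \<Rightarrow> (real^'n \<Rightarrow> 'n \<Rightarrow> 'n \<Rightarrow> 'n \<Rightarrow> real)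
    \<Rightarrow> real^'n \<Rightarrow> 'n \<Rightarrow> 'n \<Rightarrow> 'n \<Rightarrow> 'n \<Rightarrow> real" where
  "nabla03 g F y p b c e = pd p (\<lambda>z. F z b c e) y
     - (\<Sum>k\<in>UNIV. Christoffel g y p b k * F y k c e) - (\<Sum>k\<in>UNIV. Christoffel g y p c k * F y b k e)
     - (\<Sum>k\<in>UNIV. Christoffel g y p e k * F y b c k)"

definition div13 :: "(real^'n::finite \<Rightarrow> 'n \<Rightarrow> 'n \<Rightarrow> real) \<Rightarrow> (real^'n \<Rightarrow> 'n \<Rightarrow> 'n \<Rightarrow> 'n \<Rightarrow> 'n \<Rightarrow> real)
    \<Rightarrow> real^'n \<Rightarrow> 'n \<Rightarrow> 'n \<Rightarrow> 'n \<Rightarrow> real" where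
  "div13 g K y b c e = (\<Sum>m\<in>UNIV. nabla g (T13 K) y m [b, c, e] [m])"

lemma nabla_T00: "nabla g (T00 f) x a [] [] = pd a f x"
  unfolding nabla_def T00_def by simp

lemma nabla_T01: "nabla g (T01 f) x a [b] [] = pd a (\<lambda>y. f y b) x - (\<Sum>k\<in>UNIV. Christoffel g x a b k * f x k)"
  unfolding nabla_def T01_def by simp

lemma nabla_T02: "nabla g (T02 f) x a [b, c] [] = nabla02 g f x a b c"
  unfolding nabla_def T02_def nabla02_def by (simp add: eval_nat_numeral)

lemma nabla_T13: "nabla g (T13 f) x a [b, c, d] [e] = pd a (\<lambda>y. f y b c d e) x
   - (\<Sum>k\<in>UNIV. Christoffel g x a b k * f x k c d e) - (\<Sum>k\<in>UNIV. Christoffel g x a c k * f x b k d e)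
   - (\<Sum>k\<in>UNIV. Christoffel g x a d k * f x b c k e) + (\<Sum>k\<in>UNIV. Christoffel g x a k e * f x b c d k)"
  unfolding nabla_def T13_def by (simp add: eval_nat_numeral)

lemma nabla_T14: "nabla g (T14 f) x a [b, c, d, d'] [e] = pd a (\<lambda>y. f y b c d d' e) x
   - (\<Sum>k\<in>UNIV. Christoffel g x a b k * f x k c d d' e) - (\<Sum>k\<in>UNIV. Christoffel g x a c k * f x b k d d' e)
   - (\<Sum>k\<in>UNIV. Christoffel g x a d k * f x b c k d' e) - (\<Sum>k\<in>UNIV. Christoffel g x a d' k * f x b c d k e)
   + (\<Sum>k\<in>UNIV. Christoffel g x a k e * f x b c d d' k)"
  unfolding nabla_def T14_def by (simp add: eval_nat_numeral)

lemma nabla03_linear: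
  assumes U: "open U" and x: "x \<in> U"
    and eq: "\<And>y b c e. y \<in> U \<Longrightarrow> F y b c e = \<alpha> * F1 y b c e + \<beta> * F2 y b c e"
    and d1: "\<And>b c e. (\<lambda>y. F1 y b c e) differentiable (at x)"
    and d2: "\<And>b c e. (\<lambda>y. F2 y b c e) differentiable (at x)"
  shows "nabla03 g F x p b c e = \<alpha> * nabla03 g F1 x p b c e + \<beta> * nabla03 g F2 x p b c e"
proof -
  have "pd p (\<lambda>z. F z b c e) x = pd p (\<lambda>z. \<alpha> * F1 z b c e + \<beta> * F2 z b c e) x"
    by (rule pd_local[OF U x]) (rule eq)
  also have "\<dots> = \<alpha> * pd p (\<lambda>z. F1 z b c e) x + \<beta> * pd p (\<lambda>z. F2 z b c e) x"
    using d1 d2 by (simp add: pd_add pd_cmult)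
  finally show ?thesis
    using eq[OF x] unfolding nabla03_def
    by (simp add: sum.distrib sum_distrib_left ring_distribs mult_ac sum_subtractf)
qed

definition dChristoffel :: "(real^'n::finite \<Rightarrow> 'n \<Rightarrow> 'n \<Rightarrow> real) \<Rightarrow> real^'n \<Rightarrow> 'n \<Rightarrow> 'n \<Rightarrow> 'n \<Rightarrow> 'n \<Rightarrow> real" where
  "dChristoffel g y q a b c = pd q (\<lambda>w. Christoffel g w a b c) y"

definition ddChristoffel :: "(real^'n::finite \<Rightarrow> 'n \<Rightarrow> 'n \<Rightarrow> real) \<Rightarrow> real^'n \<Rightarrow> 'n \<Rightarrow> 'n \<Rightarrow> 'n \<Rightarrow> 'n \<Rightarrow> 'n \<Rightarrow> real" where
  "ddChristoffel g y r q a b c = pd r (pd q (\<lambda>w. Christoffel g w a b c)) y"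

context
  fixes U :: "(real^'n::finite) set" and g :: "real^'n \<Rightarrow> 'n \<Rightarrow> 'n \<Rightarrow> real"
  assumes U: "open U" and metric: "riemannian_metric g U"
begin

(* At each point of U the Christoffel symbols form a symmetric connection jet; the
   symmetry of second derivatives is Schwarz's theorem. *)
lemma Christoffel_jet: "y \<in> U \<Longrightarrow> torsion_free_jet (Christoffel g y) (dChristoffel g y) (ddChristoffel g y)"
proof unfold_locales
  fix a b c q r
  assume y: "y \<in> U"
  have sym: "\<And>w. w \<in> U \<Longrightarrow> Christoffel g w a b c = Christoffel g w b a c"
    by (rule Christoffel_sym[OF U metric])
  then show "Christoffel g y a b c = Christoffel g y b a c" using y .
  show "dChristoffel g y q a b c = dChristoffel g y q b a c"
    unfolding dChristoffel_def by (rule pd_local[OF U y sym])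
  show "ddChristoffel g y r q a b c = ddChristoffel g y q r a b c"
    unfolding ddChristoffel_def by (rule schwarz_smooth[OF U y Christoffel_smooth[OF U metric]])
  have "\<And>w. w \<in> U \<Longrightarrow> pd q (\<lambda>w. Christoffel g w a b c) w = pd q (\<lambda>w. Christoffel g w b a c) w"
    by (rule pd_local[OF U _ sym])
  then show "ddChristoffel g y r q a b c = ddChristoffel g y r q b a c"
    unfolding ddChristoffel_def by (rule pd_local[OF U y])
qed

lemma Riem_jet:
  assumes y: "y \<in> U"
  shows "Riem g y a b c d = torsion_free_jet.R (Christoffel g y) (dChristoffel g y) a b c d"
proof -
  interpret J: torsion_free_jet "Christoffel g y" "dChristoffel g y" "ddChristoffel g y"
    by (rule Christoffel_jet[OF y])
  show ?thesis unfolding Riem_def J.R_def dChristoffel_def ..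
qed

lemma pd_Riem:
  assumes y: "y \<in> U"
  shows "pd q (\<lambda>z. Riem g z a b c d) y
    = torsion_free_jet.dR (Christoffel g y) (dChristoffel g y) (ddChristoffel g y) q a b c d"
proof -
  interpret J: torsion_free_jet "Christoffel g y" "dChristoffel g y" "ddChristoffel g y"
    by (rule Christoffel_jet[OF y])
  have "\<And>a b c. (\<lambda>w. Christoffel g w a b c) differentiable (at y)"
    "\<And>q a b c. pd q (\<lambda>w. Christoffel g w a b c) differentiable (at y)"
    using smooth_differentiable[OF Christoffel_smooth[OF U metric] y]
      smooth_differentiable[OF smooth_pd[OF Christoffel_smooth[OF U metric]] y] by blast+
  then show ?thesis
    unfolding Riem_def J.dR_def dChristoffel_def ddChristoffel_def
    by (simp add: pd_add pd_diff pd_sum pd_mult sum.distrib)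
qed

lemma div_Riem_contracted_bianchi:
  assumes y: "y \<in> U"
  shows "div13 g (Riem g) y b c e = nabla02 g (Ric g) y c b e - nabla02 g (Ric g) y b c e"
proof -
  interpret J: torsion_free_jet "Christoffel g y" "dChristoffel g y" "ddChristoffel g y"
    by (rule Christoffel_jet[OF y])
  have dRiem: "\<And>a b c d. (\<lambda>z. Riem g z a b c d) differentiable (at y)"
    by (rule smooth_differentiable[OF Riem_smooth[OF U metric] y])
  have Ric: "\<And>a c. Ric g y a c = J.Rc a c"
    unfolding Ric_def J.Rc_def Riem_jet[OF y] ..
  have pd_Ric: "\<And>q a c. pd q (\<lambda>z. Ric g z a c) y = J.dRc q a c"
    unfolding Ric_def J.dRc_def by (simp add: pd_sum dRiem pd_Riem[OF y])
  have "div13 g (Riem g) y b c e = J.div_R b c e"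
    unfolding div13_def nabla_T13 J.div_R_def Riem_jet[OF y] pd_Riem[OF y] ..
  moreover have "nabla02 g (Ric g) y q a b' = J.nabla_Rc q a b'" for q a b'
    unfolding nabla02_def J.nabla_Rc_def Ric pd_Ric ..
  ultimately show ?thesis using J.contracted_bianchi by simp
qed

lemma ricci_identity_cyclic_Ric:
  assumes x: "x \<in> U"
  shows "(\<Sum>m\<in>UNIV. Ric g x p m * Riem g x b c e m) + (\<Sum>m\<in>UNIV. Ric g x b m * Riem g x c p e m)
     + (\<Sum>m\<in>UNIV. Ric g x c m * Riem g x p b e m)
   = (nabla03 g (nabla02 g (Ric g)) x p c b e - nabla03 g (nabla02 g (Ric g)) x c p b e)
   + (nabla03 g (nabla02 g (Ric g)) x b p c e - nabla03 g (nabla02 g (Ric g)) x p b c e)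
   + (nabla03 g (nabla02 g (Ric g)) x c b p e - nabla03 g (nabla02 g (Ric g)) x b c p e)"
proof -
  interpret J: tensor2_jet "Christoffel g x" "dChristoffel g x" "ddChristoffel g x"
    "Ric g x" "\<lambda>q a b. pd q (\<lambda>z. Ric g z a b) x" "\<lambda>r q a b. pd r (pd q (\<lambda>z. Ric g z a b)) x"
    using Christoffel_jet[OF x] schwarz_smooth[OF U x Ric_smooth[OF U metric]]
    unfolding tensor2_jet_def tensor2_jet_axioms_def by simp
  have dC: "\<And>a b c. (\<lambda>w. Christoffel g w a b c) differentiable (at x)"
    by (rule smooth_differentiable[OF Christoffel_smooth[OF U metric] x])
  have dRc: "\<And>a b. (\<lambda>z. Ric g z a b) differentiable (at x)"
    by (rule smooth_differentiable[OF Ric_smooth[OF U metric] x])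
  have dpRc: "\<And>q a b. pd q (\<lambda>z. Ric g z a b) differentiable (at x)"
    by (rule smooth_differentiable[OF smooth_pd[OF Ric_smooth[OF U metric]] x])
  have nT: "\<And>q a b. nabla02 g (Ric g) x q a b = J.nT q a b"
    unfolding nabla02_def J.nT_def ..
  have dnT: "\<And>p q a b. pd p (\<lambda>z. nabla02 g (Ric g) z q a b) x = J.dnT p q a b"
    unfolding nabla02_def J.dnT_def dChristoffel_def by (simp add: pd_add pd_diff pd_sum pd_mult dC dRc dpRc)
  have "\<And>p q a b. nabla03 g (nabla02 g (Ric g)) x p q a b = J.nnT p q a b"
    unfolding nabla03_def J.nnT_def nT dnT ..
  then show ?thesis unfolding Riem_jet[OF x] using J.ricci_identity_cyclic[of p c b e] by simp
qed

lemma div_Riem_smooth: "smooth_on (\<lambda>y. div13 g (Riem g) y b c e) U"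
  unfolding div13_def nabla_T13
  by (intro smooth_sum[OF U] smooth_add[OF U] smooth_diff[OF U] smooth_mult[OF U] smooth_pd
      Riem_smooth[OF U metric] Christoffel_smooth[OF U metric]) auto

lemma nabla_Ric_smooth: "smooth_on (\<lambda>y. nabla02 g (Ric g) y q a b) U"
  unfolding nabla02_def
  by (intro smooth_sum[OF U] smooth_diff[OF U] smooth_mult[OF U] smooth_pd
      Ric_smooth[OF U metric] Christoffel_smooth[OF U metric]) auto

(* Sum_cyc nabla_p (div R)_bce = Sum_cyc Ric_pm R_bce^m: combine the contracted
   Bianchi identity with the cyclic Ricci identity for Ric. *)
theorem cyclic_nabla_div_Riem:
  assumes x: "x \<in> U"
  shows "nabla03 g (div13 g (Riem g)) x p b c e + nabla03 g (div13 g (Riem g)) x b c p e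
       + nabla03 g (div13 g (Riem g)) x c p b e
     = (\<Sum>m\<in>UNIV. Ric g x p m * Riem g x b c e m) + (\<Sum>m\<in>UNIV. Ric g x b m * Riem g x c p e m)
       + (\<Sum>m\<in>UNIV. Ric g x c m * Riem g x p b e m)"
proof -
  let ?N = "nabla02 g (Ric g)"
  have "nabla03 g (div13 g (Riem g)) x q b' c' e' = nabla03 g ?N x q c' b' e' - nabla03 g ?N x q b' c' e'"
    for q b' c' e'
  proof -
    have "nabla03 g (div13 g (Riem g)) x q b' c' e'
        = 1 * nabla03 g (\<lambda>y b c e. ?N y c b e) x q b' c' e' + (-1) * nabla03 g ?N x q b' c' e'"
      using smooth_differentiable[OF nabla_Ric_smooth x]
      by (intro nabla03_linear[OF U x]) (auto simp: div_Riem_contracted_bianchi)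
    then show ?thesis unfolding nabla03_def by simp
  qed
  then show ?thesis unfolding ricci_identity_cyclic_Ric[OF x] by simp
qed

end

(* For a recurrent K with closed lam, nabla_m B_pbce^m = Sum_cyc nabla_p (div K)_bce.
   No metric hypothesis is needed: only the algebra of nabla. *)
lemma div_B_recurrent:
  assumes U: "open U" and x: "x \<in> U"
    and K_diff: "\<And>b c d e. (\<lambda>y. K y b c d e) differentiable (at x)"
    and lam_diff: "\<And>b. (\<lambda>y. lam y b) differentiable (at x)"
    and recurrent: "\<And>y q b c d e. y \<in> U \<Longrightarrow> nabla g (T13 K) y q [b, c, d] [e] = lam y q * K y b c d e"
    and closed: "\<And>q b. nabla g (T01 lam) x q [b] [] = nabla g (T01 lam) x b [q] []"
  shows "(\<Sum>m\<in>UNIV. nabla g (T14 (Btens g K)) x m [p, b, c, e] [m])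
       = nabla03 g (div13 g K) x p b c e + nabla03 g (div13 g K) x b c p e + nabla03 g (div13 g K) x c p b e"
proof -
  interpret J: product_jet "Christoffel g x" "lam x" "\<lambda>q a. pd q (\<lambda>y. lam y a) x"
    "K x" "\<lambda>q a b c d. pd q (\<lambda>y. K y a b c d) x" .
  have B_eq: "\<And>y a b c d e. y \<in> U \<Longrightarrow>
      Btens g K y a b c d e = lam y a * K y b c d e + lam y b * K y c a d e + lam y c * K y a b d e"
    unfolding Btens_def nabla13_def using recurrent by simp
  have div_K_eq: "\<And>y b c e. y \<in> U \<Longrightarrow> div13 g K y b c e = (\<Sum>m\<in>UNIV. lam y m * K y b c e m)"
    unfolding div13_def using recurrent by simp
  have nabla_B: "nabla g (T14 (Btens g K)) x m [p, b, c, e] [m] = J.nW m p b c e m + J.nW m b c p e m + J.nW m c p b e m"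
    for m
  proof -
    have "pd m (\<lambda>y. Btens g K y p b c e m) x
        = pd m (\<lambda>y. lam y p * K y b c e m + lam y b * K y c p e m + lam y c * K y p b e m) x"
      by (rule pd_local[OF U x]) (rule B_eq)
    also have "\<dots> = J.dW m p b c e m + J.dW m b c p e m + J.dW m c p b e m"
      unfolding J.dW_def by (simp add: pd_add pd_mult K_diff lam_diff)
    finally show ?thesis
      unfolding nabla_T14 J.nW_def J.W_def B_eq[OF x] by (simp add: sum.distrib ring_distribs)
  qed
  have nabla_div_K: "nabla03 g (div13 g K) x q b c e = J.nD q b c e" for q b c e
  proof -
    have "pd q (\<lambda>z. div13 g K z b c e) x = pd q (\<lambda>z. \<Sum>m\<in>UNIV. lam z m * K z b c e m) x"
      by (rule pd_local[OF U x]) (rule div_K_eq)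
    also have "\<dots> = J.dD q b c e"
      unfolding J.dD_def by (simp add: pd_sum pd_mult K_diff lam_diff)
    finally show ?thesis
      unfolding nabla03_def J.nD_def J.D_def div_K_eq[OF x] by simp
  qed
  have "J.nK q a b c d = lam x q * K x a b c d" for q a b c d
    using recurrent[OF x] unfolding J.nK_def nabla_T13 by simp
  moreover have "J.nL q a = J.nL a q" for q a
    using closed unfolding J.nL_def nabla_T01 by simp
  ultimately have "(\<Sum>m\<in>UNIV. J.nW m a b c e m) = J.nD a b c e" for a b c e
    by (rule J.div_W_eq_nabla_D)
  then show ?thesis
    unfolding nabla_B nabla_div_K sum.distrib by simp
qed

context
  fixes U :: "(real^'n::finite) set" and g :: "real^'n \<Rightarrow> 'n \<Rightarrow> 'n \<Rightarrow> real"
  assumes U: "open U" and metric: "riemannian_metric g U"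
begin

lemma cyclic_nabla_codazzi_term:
  fixes a :: "real^'n \<Rightarrow> 'n \<Rightarrow> 'n \<Rightarrow> real" and \<phi> :: "real^'n \<Rightarrow> real"
  defines "E \<equiv> \<lambda>y b c e. a y b e * pd c \<phi> y - a y c e * pd b \<phi> y"
  assumes x: "x \<in> U"
    and a_smooth: "\<And>b c. smooth_on (\<lambda>y. a y b c) U" and phi_smooth: "smooth_on \<phi> U"
    and a_sym: "\<And>b c. a x b c = a x c b"
    and a_codazzi: "\<And>b c d. nabla02 g a x b c d = nabla02 g a x c b d"
  shows "nabla03 g E x p b c e + nabla03 g E x b c p e + nabla03 g E x c p b e = 0"
proof -
  interpret J: codazzi_jet "Christoffel g x" "a x" "\<lambda>q b c. pd q (\<lambda>y. a y b c) x"
    "\<lambda>k. pd k \<phi> x" "\<lambda>p c. pd p (pd c \<phi>) x"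
    using Christoffel_sym[OF U metric x] a_sym schwarz_smooth[OF U x phi_smooth] a_codazzi
    unfolding codazzi_jet_def nabla02_def by blast
  have "\<And>b c. (\<lambda>y. a y b c) differentiable (at x)" "\<And>c. pd c \<phi> differentiable (at x)"
    using smooth_differentiable[OF a_smooth x] smooth_differentiable[OF smooth_pd[OF phi_smooth] x] by blast+
  then have "nabla03 g E x q b c e = J.nE q b c e" for q b c e
    unfolding nabla03_def J.nE_def J.dE_def J.E_def E_def by (simp add: pd_diff pd_mult)
  then show ?thesis using J.nabla_E_cyclic by simp
qed

lemma cyclic_nabla_div_K:
  fixes K :: "real^'n \<Rightarrow> 'n \<Rightarrow> 'n \<Rightarrow> 'n \<Rightarrow> 'n \<Rightarrow> real"
    and a :: "real^'n \<Rightarrow> 'n \<Rightarrow> 'n \<Rightarrow> real" and \<phi> :: "real^'n \<Rightarrow> real"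
  assumes x: "x \<in> U"
    and a_smooth: "\<And>b c. smooth_on (\<lambda>y. a y b c) U" and phi_smooth: "smooth_on \<phi> U"
    and div_K: "\<And>y b c e. y \<in> U \<Longrightarrow>
        div13 g K y b c e = A * div13 g (Riem g) y b c e + B * (a y b e * pd c \<phi> y - a y c e * pd b \<phi> y)"
    and a_sym: "\<And>b c. a x b c = a x c b"
    and a_codazzi: "\<And>b c d. nabla02 g a x b c d = nabla02 g a x c b d"
  shows "nabla03 g (div13 g K) x p b c e + nabla03 g (div13 g K) x b c p e + nabla03 g (div13 g K) x c p b e
       = A * (nabla03 g (div13 g (Riem g)) x p b c e + nabla03 g (div13 g (Riem g)) x b c p e
              + nabla03 g (div13 g (Riem g)) x c p b e)"
proof -
  define E where "E = (\<lambda>y b c e. a y b e * pd c \<phi> y - a y c e * pd b \<phi> y)"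
  have "smooth_on (\<lambda>y. E y b c e) U" for b c e
    unfolding E_def by (intro smooth_diff[OF U] smooth_mult[OF U] smooth_pd a_smooth phi_smooth)
  then have split: "nabla03 g (div13 g K) x q b c e
      = A * nabla03 g (div13 g (Riem g)) x q b c e + B * nabla03 g E x q b c e" for q b c e
    using smooth_differentiable[OF div_Riem_smooth[OF U metric] x] smooth_differentiable[OF _ x]
    by (intro nabla03_linear[OF U x]) (auto simp: div_K E_def)
  have codazzi: "nabla03 g E x p b c e + nabla03 g E x b c p e + nabla03 g E x c p b e = 0"
    unfolding E_def by (rule cyclic_nabla_codazzi_term[OF x a_smooth phi_smooth a_sym a_codazzi])
  have "nabla03 g (div13 g K) x p b c e + nabla03 g (div13 g K) x b c p e + nabla03 g (div13 g K) x c p b e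
      = A * (nabla03 g (div13 g (Riem g)) x p b c e + nabla03 g (div13 g (Riem g)) x b c p e
             + nabla03 g (div13 g (Riem g)) x c p b e)
        + B * (nabla03 g E x p b c e + nabla03 g E x b c p e + nabla03 g E x c p b e)"
    unfolding split by (simp add: algebra_simps)
  then show ?thesis unfolding codazzi by simp
qed

end

theorem mainTheorem12:
  fixes U :: "(real^'n::finite) set"
    and g :: "real^'n \<Rightarrow> 'n \<Rightarrow> 'n \<Rightarrow> real"
    and K :: "real^'n \<Rightarrow> 'n \<Rightarrow> 'n \<Rightarrow> 'n \<Rightarrow> 'n \<Rightarrow> real"
    and a :: "real^'n \<Rightarrow> 'n \<Rightarrow> 'n \<Rightarrow> real"
    and \<phi> :: "real^'n \<Rightarrow> real"
    and lam :: "real^'n \<Rightarrow> 'n \<Rightarrow> real"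
    and A B :: real
  assumes U_open: "open U"
    and metric: "riemannian_metric g U"
    and K_smooth: "\<forall>b c d e. smooth_on (\<lambda>x. K x b c d e) U"
    and a_smooth: "\<forall>b c. smooth_on (\<lambda>x. a x b c) U"
    and phi_smooth: "smooth_on \<phi> U"
    and lam_smooth: "\<forall>b. smooth_on (\<lambda>x. lam x b) U"
    and A_nz: "A \<noteq> 0" and B_nz: "B \<noteq> 0"
    and div_K: "\<forall>x\<in>U. \<forall>b c e.
        (\<Sum>m\<in>UNIV. nabla g (T13 K) x m [b, c, e] [m])
        = A * (\<Sum>m\<in>UNIV. nabla g (T13 (Riem g)) x m [b, c, e] [m])
          + B * (a x b e * nabla g (T00 \<phi>) x c [] [] - a x c e * nabla g (T00 \<phi>) x b [] [])"
    and a_sym: "\<forall>x\<in>U. \<forall>b c. a x b c = a x c b"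
    and a_codazzi: "\<forall>x\<in>U. \<forall>b c d. nabla g (T02 a) x b [c, d] [] = nabla g (T02 a) x c [b, d] []"
    and K_recurrent: "\<forall>x\<in>U. \<forall>p b c d e. nabla g (T13 K) x p [b, c, d] [e] = lam x p * K x b c d e"
    and lam_nonzero: "\<exists>x\<in>U. \<exists>p. lam x p \<noteq> 0"
    and lam_closed: "\<forall>x\<in>U. \<forall>p b. nabla g (T01 lam) x p [b] [] = nabla g (T01 lam) x b [p] []"
  shows "\<forall>x\<in>U. \<forall>p b c e.
     (\<Sum>m\<in>UNIV. Ric g x p m * Riem g x b c e m)
     + (\<Sum>m\<in>UNIV. Ric g x b m * Riem g x c p e m)
     + (\<Sum>m\<in>UNIV. Ric g x c m * Riem g x p b e m)
     = (1 / A) * (\<Sum>m\<in>UNIV. nabla g (T14 (Btens g K)) x m [p, b, c, e] [m])"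
proof (intro ballI allI)
  fix x p b c e assume x: "x \<in> U"
  have "(\<Sum>m\<in>UNIV. nabla g (T14 (Btens g K)) x m [p, b, c, e] [m])
      = nabla03 g (div13 g K) x p b c e + nabla03 g (div13 g K) x b c p e + nabla03 g (div13 g K) x c p b e"
    using K_smooth lam_smooth K_recurrent lam_closed x
    by (intro div_B_recurrent[OF U_open x]) (auto intro: smooth_differentiable[OF _ x])
  also have "\<dots> = A * (nabla03 g (div13 g (Riem g)) x p b c e + nabla03 g (div13 g (Riem g)) x b c p e
                      + nabla03 g (div13 g (Riem g)) x c p b e)"
    using a_smooth phi_smooth div_K a_sym a_codazzi x
    by (intro cyclic_nabla_div_K[OF U_open metric x, where a=a and \<phi>=\<phi>]) (auto simp: div13_def nabla_T00 nabla_T02)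
  also have "\<dots> = A * ((\<Sum>m\<in>UNIV. Ric g x p m * Riem g x b c e m) + (\<Sum>m\<in>UNIV. Ric g x b m * Riem g x c p e m)
                      + (\<Sum>m\<in>UNIV. Ric g x c m * Riem g x p b e m))"
    unfolding cyclic_nabla_div_Riem[OF U_open metric x] ..
  finally show "(\<Sum>m\<in>UNIV. Ric g x p m * Riem g x b c e m) + (\<Sum>m\<in>UNIV. Ric g x b m * Riem g x c p e m)
      + (\<Sum>m\<in>UNIV. Ric g x c m * Riem g x p b e m)
      = (1 / A) * (\<Sum>m\<in>UNIV. nabla g (T14 (Btens g K)) x m [p, b, c, e] [m])"
    using A_nz by simp
qed

end
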